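(* Let $X,Y$ be finite-dimensional real Euclidean spaces, $g:X\to(-\infty,+\infty]$ and $f:Y\to(-\infty,+\infty]$ proper closed convex functions, $f^*$ the convex conjugate of $f$, $K:X\to Y$ a linear operator with $L=\|K\|$, and assume the saddle point problem $\min_{x\in X}\max_{y\in Y} \mathcal{L}(x,y)=g(x)+\langle Kx,y\rangle-f^*(y)$ has at least one saddle point. Let $\{a_k\}_{k\ge1},\{b_k\}_{k\ge1}\subset(0,1)$ be monotonically non-increasing sequences, let $\tau,\sigma>0$ satisfy $\sqrt{\sigma\tau}\,L<1-a_k$ and $\sqrt{\sigma\tau}\,L<1-b_k$ for all $k$, and let $\theta=1$. Given $(x_0,y_1)\in X\times Y$, set $x_0^{ag}=x_0=x_{-1}$, $y_1^{ag}=y_1$, and for $k=1,2,\dots$ compute $$x_k^{ag}=(1-a_k)x_{k-1}^{ag}+a_kx_{k-1},\qquad y_{k+1}^{ag}=(1-b_{k+1})y_k^{ag}+b_{k+1}y_k,$$ $$x_k^{md}=(1-a_k)x_{k-1}+a_kx_k^{ag},\qquad y_{k+1}^{md}=(1-b_{k+1})y_k+b_{k+1}y_{k+1}^{ag},$$ $$x_k=\mathrm{Prox}_{\tau g}(x_k^{md}-\tau K^Ty_k),\quad \bar x_k=x_k+\theta(x_k-x_{k-1}),\quad y_{k+1}=\mathrm{Prox}_{\sigma f^*}(y_{k+1}^{md}+\sigma K\bar x_k).$$ Then the sequence $\{(x_k,y_k)\}$ converges to a saddle point of $\mathcal{L}$.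
   Context: For a proper closed convex $h$ and $\lambda>0$, $\mathrm{Prox}_{\lambda h}(x)=\arg\min_{z}\{h(z)+\frac{1}{2\lambda}\|z-x\|^2\}$. $K^T$ denotes the adjoint of $K$ and $\|K\|$ its operator (spectral) norm. A saddle point $(\hat x,\hat y)$ of $\mathcal{L}$ is a pair with $\mathcal{L}(\hat x,y)\le\mathcal{L}(\hat x,\hat y)\le\mathcal{L}(x,\hat y)$ for all $(x,y)\in X\times Y$. This iteration is called NPDA in the paper. *)

theory Defs
  imports "HOL-Analysis.Analysis"
begin

definition epigraph_e :: "('a \<Rightarrow> ereal) \<Rightarrow> ('a \<times> real) set" where
  "epigraph_e h = {(x, r). h x \<le> ereal r}"

definition proper_fun :: "('a \<Rightarrow> ereal) \<Rightarrow> bool" where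
  "proper_fun h \<longleftrightarrow> (\<forall>x. h x \<noteq> -\<infinity>) \<and> (\<exists>x. h x < \<infinity>)"

definition convex_fun :: "('a::real_vector \<Rightarrow> ereal) \<Rightarrow> bool" where
  "convex_fun h \<longleftrightarrow> convex (epigraph_e h)"

definition closed_fun :: "('a::topological_space \<Rightarrow> ereal) \<Rightarrow> bool" where
  "closed_fun h \<longleftrightarrow> closed (epigraph_e h)"

definition conj_fun :: "('a::real_inner \<Rightarrow> ereal) \<Rightarrow> 'a \<Rightarrow> ereal" where
  "conj_fun h y = (SUP x. ereal (x \<bullet> y) - h x)"

definition prox :: "real \<Rightarrow> ('a::real_normed_vector \<Rightarrow> ereal) \<Rightarrow> 'a \<Rightarrow> 'a" where
  "prox lam h x = (SOME z. \<forall>w. h z + ereal (norm (z - x)^2 / (2 * lam))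
                                 \<le> h w + ereal (norm (w - x)^2 / (2 * lam)))"

definition lagr :: "('a \<Rightarrow> ereal) \<Rightarrow> ('b \<Rightarrow> ereal) \<Rightarrow> ('a \<Rightarrow> 'b::real_inner) \<Rightarrow> 'a \<Rightarrow> 'b \<Rightarrow> ereal" where
  "lagr g f K x y = g x + ereal (K x \<bullet> y) - conj_fun f y"

definition saddle_point :: "('a \<Rightarrow> 'b \<Rightarrow> ereal) \<Rightarrow> 'a \<Rightarrow> 'b \<Rightarrow> bool" where
  "saddle_point L xh yh \<longleftrightarrow> (\<forall>x y. L xh y \<le> L xh yh \<and> L xh yh \<le> L x yh)"

end

theory Submission
  imports Defs
begin

(* Fix a KKT point (xh, yh) and put \<kappa> = sqrt (\<sigma> \<tau>) |K|. The Lyapunov function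
     (|x_k - xh|^2 + (1 - a_k) |xag_k - xh|^2 + \<kappa> |x_k - x_(k-1)|^2) / (2 \<tau>)
       + (|y_k - yh|^2 + (1 - b_k) |yag_k - yh|^2) / (2 \<sigma>) + <K (x_k - x_(k-1)), y_k - yh>
   dominates the distances to (xh, yh) because \<kappa> < 1 - a_k and \<kappa> < 1 - b_k. Adding the prox
   inequalities of one step to the subgradient inequalities of (xh, yh) shows that it decreases by a
   dissipation term controlling |x_(k+1) - x_k|^2, |y_(k+1) - y_k|^2 and the averaging gaps, up to a
   relative error caused by the decrease of a_k and b_k, which is summable. Hence the Lyapunov
   function converges, the iterates are bounded and asymptotically regular, and the closedness of
   the epigraphs makes every limit point a KKT point. For two KKT points the difference of their
   Lyapunov functions is affine in x_k + (1 - a_k) xag_k and y_k + (1 - b_k) yag_k; since xag_k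
   averages the x_j, convergence of such a combination in a fixed direction forces convergence of the
   x_k themselves in that direction, so the limit point is unique (an Opial-type argument). *)

section \<open>Closed convex functions and their conjugates\<close>

lemma mem_epigraph_e [simp]: "(x, r) \<in> epigraph_e h \<longleftrightarrow> h x \<le> ereal r"
  by (simp add: epigraph_e_def)

lemma closed_fun_le_limit:
  fixes h :: "'a::topological_space \<Rightarrow> ereal"
  assumes "closed_fun h" "w \<longlonglongrightarrow> w0" "r \<longlonglongrightarrow> r0" "\<And>n. h (w n) \<le> ereal (r n)"
  shows "h w0 \<le> ereal r0"
proof -
  have "(w0, r0) \<in> epigraph_e h"
    using assms(1) unfolding closed_fun_def
    by (rule closed_sequentially[of _ "\<lambda>n. (w n, r n)"]) (use assms(2-4) in \<open>auto intro: tendsto_Pair\<close>)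
  then show ?thesis by simp
qed

lemma closed_fun_add_le_limit:
  fixes h :: "'a::topological_space \<Rightarrow> ereal"
  assumes "closed_fun h" "proper_fun h" "u \<longlonglongrightarrow> u0" "t \<longlonglongrightarrow> t0"
    and "\<And>n. h (u n) + ereal (t n) \<le> h w"
  shows "h u0 + ereal t0 \<le> h w"
proof (cases "h w")
  case (real W)
  have "h (u n) \<le> ereal (W - t n)" for n
    using assms(5)[of n] real by (cases "h (u n)") auto
  moreover have "(\<lambda>n. W - t n) \<longlonglongrightarrow> W - t0" by (intro tendsto_intros assms(4))
  ultimately have "h u0 \<le> ereal (W - t0)" using closed_fun_le_limit[OF assms(1,3)] by blast
  then show ?thesis using real assms(2) unfolding proper_fun_def by (cases "h u0") auto
next
  case MInf
  then show ?thesis using assms(2) unfolding proper_fun_def by auto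
qed simp

lemma convex_funD:
  fixes h :: "'a::real_vector \<Rightarrow> ereal"
  assumes "convex_fun h" "h z \<le> ereal p" "h w \<le> ereal s" "0 \<le> t" "t \<le> 1"
  shows "h ((1 - t) *\<^sub>R z + t *\<^sub>R w) \<le> ereal ((1 - t) * p + t * s)"
proof -
  have "(1 - t) *\<^sub>R (z, p) + t *\<^sub>R (w, s) \<in> epigraph_e h"
    using assms unfolding convex_fun_def by (intro convexD) auto
  then show ?thesis by simp
qed

lemma proper_fun_real:
  assumes "proper_fun h" "h x \<noteq> \<infinity>"
  shows "h x = ereal (real_of_ereal (h x))"
  using assms unfolding proper_fun_def by (cases "h x") auto

lemma proper_funE:
  assumes "proper_fun h"
  obtains x0 c where "h x0 = ereal c"
proof -
  obtain x0 where "h x0 < \<infinity>" "h x0 \<noteq> -\<infinity>" using assms unfolding proper_fun_def by auto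
  then show thesis using that by (cases "h x0") auto
qed

text \<open>Separating a point strictly below the graph from the closed convex epigraph yields a
  non-vertical hyperplane, i.e. an affine minorant.\<close>

lemma affine_minorant_exists:
  fixes h :: "'a::euclidean_space \<Rightarrow> ereal"
  assumes "proper_fun h" "convex_fun h" "closed_fun h"
  obtains a c where "\<And>x. ereal (a \<bullet> x + c) \<le> h x"
proof -
  obtain x0 c0 where x0: "h x0 = ereal c0" using proper_funE[OF assms(1)] .
  have "(x0, c0 - 1) \<notin> epigraph_e h" using x0 by simp
  then obtain p \<beta> where p: "p \<bullet> (x0, c0 - 1) < \<beta>" "\<forall>z\<in>epigraph_e h. \<beta> < p \<bullet> z"
    using separating_hyperplane_closed_point assms(2,3) unfolding convex_fun_def closed_fun_def
    by blast
  obtain a1 a2 where a: "p = (a1, a2)" by (cases p)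
  have "(x0, c0) \<in> epigraph_e h" using x0 by simp
  then have "a1 \<bullet> x0 + a2 * (c0 - 1) < a1 \<bullet> x0 + a2 * c0" using p a by fastforce
  then have a2: "a2 > 0" by (simp add: algebra_simps)
  have "ereal ((- (1 / a2) *\<^sub>R a1) \<bullet> x + \<beta> / a2) \<le> h x" for x
  proof (cases "h x")
    case (real c)
    then have "\<beta> < a1 \<bullet> x + a2 * c" using p(2)[rule_format, of "(x, c)"] a by simp
    then have "(- (1 / a2) *\<^sub>R a1) \<bullet> x + \<beta> / a2 \<le> c" using a2 by (simp add: field_simps)
    then show ?thesis using real by simp
  qed (use assms(1) in \<open>auto simp: proper_fun_def\<close>)
  then show thesis by (rule that)
qed

lemma conj_fun_ge:
  assumes "f x0 = ereal c"
  shows "ereal (x0 \<bullet> y - c) \<le> conj_fun f y"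
proof -
  have "ereal (x0 \<bullet> y) - f x0 \<le> conj_fun f y"
    unfolding conj_fun_def by (rule SUP_upper) simp
  then show ?thesis using assms by simp
qed

lemma conj_fun_le_of_minorant:
  assumes "\<And>x. ereal (a \<bullet> x + c) \<le> f x"
  shows "conj_fun f a \<le> ereal (- c)"
  unfolding conj_fun_def
proof (rule SUP_least)
  fix x
  show "ereal (x \<bullet> a) - f x \<le> ereal (- c)"
    using assms[of x] by (cases "f x") (auto simp: inner_commute)
qed

lemma epigraph_conj_fun:
  assumes "\<And>x. f x \<noteq> -\<infinity>"
  shows "epigraph_e (conj_fun f) =
    (\<Inter>x\<in>{x. f x \<noteq> \<infinity>}. {p. (x, -1::real) \<bullet> p \<le> real_of_ereal (f x)})"
proof (intro set_eqI)
  fix p :: "'a \<times> real"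
  obtain y r where p: "p = (y, r)" by (cases p)
  have "p \<in> epigraph_e (conj_fun f) \<longleftrightarrow> (\<forall>x. ereal (x \<bullet> y) - f x \<le> ereal r)"
    unfolding p mem_epigraph_e conj_fun_def by (simp add: SUP_le_iff)
  also have "\<dots> \<longleftrightarrow> (\<forall>x\<in>{x. f x \<noteq> \<infinity>}. (x, -1::real) \<bullet> p \<le> real_of_ereal (f x))"
  proof (intro iffI ballI allI)
    fix x
    assume "\<forall>x. ereal (x \<bullet> y) - f x \<le> ereal r" and x: "x \<in> {x. f x \<noteq> \<infinity>}"
    then have "ereal (x \<bullet> y) - f x \<le> ereal r" by blast
    then show "(x, -1::real) \<bullet> p \<le> real_of_ereal (f x)"
      using assms[of x] p x by (cases "f x") auto
  next
    fix x
    assume H: "\<forall>x\<in>{x. f x \<noteq> \<infinity>}. (x, -1::real) \<bullet> p \<le> real_of_ereal (f x)"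
    show "ereal (x \<bullet> y) - f x \<le> ereal r"
      using assms[of x] p H[rule_format, of x] by (cases "f x") auto
  qed
  finally show "p \<in> epigraph_e (conj_fun f) \<longleftrightarrow>
      p \<in> (\<Inter>x\<in>{x. f x \<noteq> \<infinity>}. {p. (x, -1::real) \<bullet> p \<le> real_of_ereal (f x)})"
    by simp
qed

lemma convex_fun_conj_fun: "(\<And>x. f x \<noteq> -\<infinity>) \<Longrightarrow> convex_fun (conj_fun f)"
  unfolding convex_fun_def by (simp add: epigraph_conj_fun convex_INT convex_halfspace_le)

lemma closed_fun_conj_fun: "(\<And>x. f x \<noteq> -\<infinity>) \<Longrightarrow> closed_fun (conj_fun f)"
  unfolding closed_fun_def by (simp add: epigraph_conj_fun closed_INT closed_halfspace_le)

lemma proper_fun_conj_fun: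
  fixes f :: "'a::euclidean_space \<Rightarrow> ereal"
  assumes "proper_fun f" "convex_fun f" "closed_fun f"
  shows "proper_fun (conj_fun f)"
proof -
  obtain x0 c where "f x0 = ereal c" using proper_funE[OF assms(1)] .
  then have "conj_fun f y \<noteq> -\<infinity>" for y
    using conj_fun_ge[of f x0 c y] by auto
  moreover obtain a c' where "\<And>x. ereal (a \<bullet> x + c') \<le> f x"
    using affine_minorant_exists[OF assms] by blast
  then have "conj_fun f a \<le> ereal (- c')" by (rule conj_fun_le_of_minorant)
  then have "conj_fun f a < \<infinity>" using le_less_trans by fastforce
  ultimately show ?thesis unfolding proper_fun_def by blast
qed

section \<open>The proximal map\<close>

lemma norm_add_square:
  fixes u v :: "'a::real_inner"
  shows "norm (u + v) ^ 2 = norm u ^ 2 + 2 * (u \<bullet> v) + norm v ^ 2"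
  by (simp add: power2_norm_eq_inner inner_add_left inner_add_right inner_commute)

lemma norm_diff_square:
  fixes u v :: "'a::real_inner"
  shows "norm (u - v) ^ 2 = norm u ^ 2 - 2 * (u \<bullet> v) + norm v ^ 2"
  by (simp add: power2_norm_eq_inner inner_diff_left inner_diff_right inner_commute)

lemma inner_plus_norm_sq_ge:
  fixes p u :: "'a::real_inner"
  assumes "lam > 0"
  shows "- lam * norm p ^ 2 / 2 \<le> p \<bullet> u + norm u ^ 2 / (2 * lam)"
proof -
  have "0 \<le> norm (u + lam *\<^sub>R p) ^ 2" by simp
  also have "\<dots> = norm u ^ 2 + 2 * lam * (p \<bullet> u) + lam ^ 2 * norm p ^ 2"
    by (simp add: norm_add_square power_mult_distrib inner_commute)
  finally have "0 \<le> (norm u ^ 2 + 2 * lam * (p \<bullet> u) + lam ^ 2 * norm p ^ 2) / (2 * lam)"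
    using assms by simp
  also have "\<dots> = p \<bullet> u + norm u ^ 2 / (2 * lam) + lam * norm p ^ 2 / 2"
    using assms by (simp add: field_simps power2_eq_square)
  finally show ?thesis by simp
qed

lemma prox_objective_coercive:
  fixes h :: "'a::real_inner \<Rightarrow> ereal"
  assumes "\<And>x. ereal (p \<bullet> x + c) \<le> h x" "lam > 0" "h w = ereal r"
  shows "p \<bullet> v + c - lam * norm p ^ 2 + norm (w - v) ^ 2 / (4 * lam)
    \<le> r + norm (w - v) ^ 2 / (2 * lam)"
proof -
  have "- (2 * lam) * norm p ^ 2 / 2 \<le> p \<bullet> (w - v) + norm (w - v) ^ 2 / (2 * (2 * lam))"
    using assms(2) by (intro inner_plus_norm_sq_ge) simp
  moreover have "p \<bullet> w + c \<le> r" using assms(1)[of w] assms(3) by simp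
  moreover have "norm (w - v) ^ 2 / (4 * lam) \<le> norm (w - v) ^ 2 / (2 * lam)"
    using assms(2) by (intro divide_left_mono) auto
  ultimately show ?thesis by (simp add: inner_diff_right)
qed

lemma prox_objective_minimizing_sequence:
  fixes h :: "'a::real_inner \<Rightarrow> ereal" and v :: 'a
  assumes h: "proper_fun h" and minor: "\<And>x. ereal (p \<bullet> x + c) \<le> h x" and lam: "lam > 0"
  defines "q w \<equiv> norm (w - v) ^ 2 / (2 * lam)"
  obtains \<mu> ws where "bounded (range ws)" "\<And>n. h (ws n) \<le> ereal (\<mu> + 1 / (real n + 1) - q (ws n))"
    and "\<And>w. ereal \<mu> \<le> h w + ereal (q w)"
proof -
  define T where "T = {w. h w \<noteq> \<infinity>}"
  define \<phi> where "\<phi> w = real_of_ereal (h w) + q w" for w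
  define c0 where "c0 = p \<bullet> v + c - lam * norm p ^ 2"
  have hT: "h w = ereal (real_of_ereal (h w))" if "w \<in> T" for w
    using proper_fun_real[OF h] that unfolding T_def by blast
  have coercive: "c0 + norm (w - v) ^ 2 / (4 * lam) \<le> \<phi> w" if "w \<in> T" for w
    using prox_objective_coercive[OF minor lam hT[OF that]] unfolding c0_def \<phi>_def q_def .
  have "c0 \<le> \<phi> w" if "w \<in> T" for w
    using coercive[OF that] lam by (smt (verit) divide_nonneg_pos zero_le_power2)
  then have bdd: "bdd_below (\<phi> ` T)" by (intro bdd_belowI2)
  obtain w0 where w0: "w0 \<in> T" using h unfolding proper_fun_def T_def by auto
  define \<mu> where "\<mu> = Inf (\<phi> ` T)"
  have "\<exists>w\<in>T. \<phi> w < \<mu> + 1 / (real n + 1)" for n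
    using cInf_lessD[of "\<phi> ` T" "\<mu> + 1 / (real n + 1)"] w0 unfolding \<mu>_def by force
  then obtain ws where ws: "\<And>n. ws n \<in> T" "\<And>n. \<phi> (ws n) < \<mu> + 1 / (real n + 1)"
    by metis
  show thesis
  proof
    have "norm (ws n - v) \<le> sqrt (4 * lam * (\<mu> + 1 - c0))" for n
    proof (rule real_le_rsqrt)
      have "1 / (real n + 1) \<le> 1" by (simp add: field_simps)
      then have "norm (ws n - v) ^ 2 / (4 * lam) \<le> \<mu> + 1 - c0"
        using coercive[OF ws(1)[of n]] ws(2)[of n] by linarith
      then show "norm (ws n - v) ^ 2 \<le> 4 * lam * (\<mu> + 1 - c0)"
        using lam by (simp add: field_simps)
    qed
    then show "bounded (range ws)"
      by (intro bounded_subset[OF bounded_cball[of v]]) (auto simp: dist_norm norm_minus_commute)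
    show "h (ws n) \<le> ereal (\<mu> + 1 / (real n + 1) - q (ws n))" for n
      using ws(2)[of n] unfolding \<phi>_def by (subst hT[OF ws(1)]) simp
    show "ereal \<mu> \<le> h w + ereal (q w)" for w
    proof (cases "w \<in> T")
      case True
      have "\<mu> \<le> \<phi> w" unfolding \<mu>_def using bdd True by (simp add: cInf_lower)
      then show ?thesis unfolding \<phi>_def by (subst hT[OF True]) simp
    qed (simp add: T_def)
  qed
qed

lemma prox_minimizer_exists:
  fixes h :: "'a::euclidean_space \<Rightarrow> ereal"
  assumes h: "proper_fun h" "closed_fun h" and minor: "\<And>x. ereal (p \<bullet> x + c) \<le> h x"
    and lam: "lam > 0"
  shows "\<exists>z. \<forall>w. h z + ereal (norm (z - v) ^ 2 / (2 * lam))
                 \<le> h w + ereal (norm (w - v) ^ 2 / (2 * lam))"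
proof -
  define q where "q w = norm (w - v) ^ 2 / (2 * lam)" for w
  obtain \<mu> ws where ws: "bounded (range ws)" "\<And>n. h (ws n) \<le> ereal (\<mu> + 1 / (real n + 1) - q (ws n))"
    and \<mu>: "\<And>w. ereal \<mu> \<le> h w + ereal (q w)"
    using prox_objective_minimizing_sequence[OF h(1) minor lam] unfolding q_def by metis
  obtain z r where r: "strict_mono r" "(ws \<circ> r) \<longlonglongrightarrow> z"
    using bounded_imp_convergent_subsequence[OF ws(1)] by blast
  have "(\<lambda>n. 1 / (real n + 1)) \<longlonglongrightarrow> 0"
    using LIMSEQ_inverse_real_of_nat by (simp add: divide_inverse add.commute)
  from LIMSEQ_subseq_LIMSEQ[OF this r(1)]
  have "(\<lambda>n. \<mu> + 1 / (real (r n) + 1) - q (ws (r n))) \<longlonglongrightarrow> \<mu> + 0 - q z"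
    using r(2) lam unfolding q_def o_def by (intro tendsto_intros) auto
  then have "h z \<le> ereal (\<mu> + 0 - q z)"
    using closed_fun_le_limit[OF h(2) r(2)] ws(2) by (simp add: o_def)
  then have "h z + ereal (q z) \<le> ereal \<mu>"
    by (cases "h z") auto
  then show ?thesis using \<mu> unfolding q_def by (blast intro: order_trans)
qed

lemma prox_minimizes:
  fixes h :: "'a::euclidean_space \<Rightarrow> ereal"
  assumes "proper_fun h" "convex_fun h" "closed_fun h" "lam > 0"
  shows "h (prox lam h v) + ereal (norm (prox lam h v - v) ^ 2 / (2 * lam))
    \<le> h w + ereal (norm (w - v) ^ 2 / (2 * lam))"
proof -
  obtain p c where "\<And>x. ereal (p \<bullet> x + c) \<le> h x"
    using affine_minorant_exists[OF assms(1-3)] by blast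
  from someI_ex[OF prox_minimizer_exists[OF assms(1,3) this assms(4)]] show ?thesis
    unfolding prox_def by blast
qed

lemma prox_finite:
  fixes h :: "'a::euclidean_space \<Rightarrow> ereal"
  assumes "proper_fun h" "convex_fun h" "closed_fun h" "lam > 0"
  shows "h (prox lam h v) \<noteq> \<infinity>"
proof
  assume "h (prox lam h v) = \<infinity>"
  moreover obtain w where "h w < \<infinity>" using assms(1) unfolding proper_fun_def by blast
  ultimately show False using prox_minimizes[OF assms, of v w] by auto
qed

lemma nonpos_if_le_mult_small:
  fixes d c :: real
  assumes "0 \<le> c" "\<And>t. 0 < t \<Longrightarrow> t \<le> 1 \<Longrightarrow> d \<le> t * c"
  shows "d \<le> 0"
proof (rule ccontr)
  assume "\<not> d \<le> 0"
  define t where "t = min 1 (d / (c + 1))"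
  have t: "0 < t" "t \<le> 1" using \<open>\<not> d \<le> 0\<close> assms(1) unfolding t_def by auto
  have "t * c \<le> d / (c + 1) * c" unfolding t_def using assms(1) by (intro mult_right_mono) auto
  also have "\<dots> < d" using \<open>\<not> d \<le> 0\<close> assms(1) by (simp add: field_simps)
  finally show False using assms(2)[OF t] by simp
qed

text \<open>Comparing the prox objective at z and at (1 - t) z + t w and letting t tend to 0.\<close>

lemma prox_variational_ineq:
  fixes h :: "'a::euclidean_space \<Rightarrow> ereal" and v w :: 'a
  assumes h: "proper_fun h" "convex_fun h" "closed_fun h" and lam: "lam > 0"
  defines "z \<equiv> prox lam h v"
  shows "h z + ereal ((v - z) \<bullet> (w - z) / lam) \<le> h w"
proof (cases "h w = \<infinity>")
  case False
  define q where "q u = norm (u - v) ^ 2 / (2 * lam)" for u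
  obtain Hz Hw where Hz: "h z = ereal Hz" and Hw: "h w = ereal Hw"
    using proper_fun_real[OF h(1)] prox_finite[OF h lam] False unfolding z_def by metis
  have key: "Hz - Hw + (v - z) \<bullet> (w - z) / lam \<le> t * (norm (w - z) ^ 2 / (2 * lam))"
    if t: "0 < t" "t \<le> 1" for t
  proof -
    define wt where "wt = (1 - t) *\<^sub>R z + t *\<^sub>R w"
    have "h wt \<le> ereal ((1 - t) * Hz + t * Hw)"
      unfolding wt_def using t by (intro convex_funD[OF h(2)]) (auto simp: Hz Hw)
    moreover have "h z + ereal (q z) \<le> h wt + ereal (q wt)"
      unfolding z_def q_def by (rule prox_minimizes[OF h lam])
    ultimately have objective: "Hz + q z \<le> (1 - t) * Hz + t * Hw + q wt"
      using Hz by (metis add_right_mono order_trans plus_ereal.simps(1) ereal_less_eq(3))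
    have e: "wt - v = (z - v) + t *\<^sub>R (w - z)" unfolding wt_def by (simp add: algebra_simps)
    have "norm (wt - v) ^ 2 = norm (z - v) ^ 2 + 2 * t * ((z - v) \<bullet> (w - z)) + t ^ 2 * norm (w - z) ^ 2"
      unfolding e norm_add_square by (simp add: power_mult_distrib)
    then have "q wt = q z + t * ((z - v) \<bullet> (w - z) / lam + t * (norm (w - z) ^ 2 / (2 * lam)))"
      unfolding q_def using lam by (simp add: field_simps power2_eq_square)
    with objective have "t * (Hz - Hw) \<le> t * ((z - v) \<bullet> (w - z) / lam + t * (norm (w - z) ^ 2 / (2 * lam)))"
      by (simp add: algebra_simps)
    then have "Hz - Hw \<le> (z - v) \<bullet> (w - z) / lam + t * (norm (w - z) ^ 2 / (2 * lam))"
      using t by simp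
    moreover have "(v - z) \<bullet> (w - z) = - ((z - v) \<bullet> (w - z))" by (simp add: inner_diff_left)
    ultimately show ?thesis by simp
  qed
  have "Hz - Hw + (v - z) \<bullet> (w - z) / lam \<le> 0"
    by (rule nonpos_if_le_mult_small[OF _ key]) (use lam in auto)
  then show ?thesis using Hz Hw by simp
qed simp

section \<open>Saddle points\<close>

text \<open>The optimality conditions -(adjoint K) yh \<in> \<partial>g(xh) and K xh \<in> \<partial>fs(yh),
  written as subgradient inequalities.\<close>

definition kkt_point ::
    "('a::real_inner \<Rightarrow> ereal) \<Rightarrow> ('b::real_inner \<Rightarrow> ereal) \<Rightarrow> ('a \<Rightarrow> 'b) \<Rightarrow> 'a \<Rightarrow> 'b \<Rightarrow> bool" where
  "kkt_point g fs K xh yh \<longleftrightarrow> g xh \<noteq> \<infinity> \<and> fs yh \<noteq> \<infinity>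
     \<and> (\<forall>x. g xh + ereal (K (xh - x) \<bullet> yh) \<le> g x)
     \<and> (\<forall>y. fs yh + ereal (K xh \<bullet> (y - yh)) \<le> fs y)"

lemma kkt_point_if_saddle_point:
  assumes g: "proper_fun g" and fs: "proper_fun fs" and K: "linear K"
    and S: "saddle_point (\<lambda>x y. g x + ereal (K x \<bullet> y) - fs y) xh yh"
  shows "kkt_point g fs K xh yh"
proof -
  let ?L = "\<lambda>x y. g x + ereal (K x \<bullet> y) - fs y"
  have gm: "g x \<noteq> -\<infinity>" and fm: "fs y \<noteq> -\<infinity>" for x y
    using g fs unfolding proper_fun_def by auto
  have S1: "?L xh y \<le> ?L xh yh" and S2: "?L xh yh \<le> ?L x yh" for x y
    using S unfolding saddle_point_def by auto
  obtain x0 y0 where x0: "g x0 < \<infinity>" and y0: "fs y0 < \<infinity>"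
    using g fs unfolding proper_fun_def by auto
  have "g xh \<noteq> \<infinity>"
  proof
    assume "g xh = \<infinity>"
    then have "?L x0 yh = \<infinity>" using S2[of x0] fm[of yh] by (cases "fs yh") auto
    then show False using x0 gm[of x0] fm[of yh] by (cases "g x0"; cases "fs yh") auto
  qed
  then obtain G where G: "g xh = ereal G" using gm[of xh] by (cases "g xh") auto
  have "fs yh \<noteq> \<infinity>"
  proof
    assume "fs yh = \<infinity>"
    then have "?L xh y0 = -\<infinity>" using S1[of y0] G by simp
    then show False using y0 fm[of y0] G by (cases "fs y0") auto
  qed
  then obtain F where F: "fs yh = ereal F" using fm[of yh] by (cases "fs yh") auto
  have "g xh + ereal (K (xh - x) \<bullet> yh) \<le> g x" for x
    using S2[of x] G F gm[of x] K by (cases "g x") (auto simp: linear_diff inner_diff_left)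
  moreover have "fs yh + ereal (K xh \<bullet> (y - yh)) \<le> fs y" for y
    using S1[of y] G F fm[of y] by (cases "fs y") (auto simp: inner_diff_right)
  ultimately show ?thesis unfolding kkt_point_def using G F by auto
qed

lemma saddle_point_if_kkt_point:
  assumes g: "proper_fun g" and fs: "proper_fun fs" and K: "linear K"
    and "kkt_point g fs K xh yh"
  shows "saddle_point (\<lambda>x y. g x + ereal (K x \<bullet> y) - fs y) xh yh"
proof -
  obtain G F where G: "g xh = ereal G" and F: "fs yh = ereal F"
    and kx: "\<And>x. ereal (G + K (xh - x) \<bullet> yh) \<le> g x"
    and ky: "\<And>y. ereal (F + K xh \<bullet> (y - yh)) \<le> fs y"
    using assms unfolding kkt_point_def proper_fun_def by (cases "g xh"; cases "fs yh") auto
  show ?thesis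
    unfolding saddle_point_def
  proof (intro allI conjI)
    fix x y
    show "g xh + ereal (K xh \<bullet> y) - fs y \<le> g xh + ereal (K xh \<bullet> yh) - fs yh"
      using ky[of y] G F by (cases "fs y") (auto simp: inner_diff_right)
    show "g xh + ereal (K xh \<bullet> yh) - fs yh \<le> g x + ereal (K x \<bullet> yh) - fs yh"
      using kx[of x] G F K by (cases "g x") (auto simp: linear_diff inner_diff_left)
  qed
qed

lemma saddle_point_iff_kkt_point:
  assumes "proper_fun g" "proper_fun fs" "linear K"
  shows "saddle_point (\<lambda>x y. g x + ereal (K x \<bullet> y) - fs y) xh yh \<longleftrightarrow> kkt_point g fs K xh yh"
  using kkt_point_if_saddle_point[OF assms] saddle_point_if_kkt_point[OF assms] by blast

lemma saddle_point_swap: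
  assumes "saddle_point L x1 y1" "saddle_point L x2 y2"
  shows "saddle_point L x1 y2"
proof -
  have "L x1 y2 = L x1 y1" "L x2 y2 = L x1 y1"
    using assms unfolding saddle_point_def by (metis order_antisym order_trans)+
  with assms show ?thesis unfolding saddle_point_def by metis
qed

lemma kkt_point_swap:
  assumes "proper_fun g" "proper_fun fs" "linear K"
    and "kkt_point g fs K x1 y1" "kkt_point g fs K x2 y2"
  shows "kkt_point g fs K x1 y2"
proof -
  note iff = saddle_point_iff_kkt_point[OF assms(1-3)]
  show ?thesis using saddle_point_swap assms(4,5) unfolding iff[symmetric] .
qed

section \<open>Real sequences\<close>

lemma contraction_exp_bound:
  fixes v t :: "nat \<Rightarrow> real"
  assumes v: "\<And>n. 0 \<le> v n" and step: "\<And>n. n \<ge> N \<Longrightarrow> v (Suc n) \<le> (1 - t n) * v n"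
    and "n \<ge> N"
  shows "v n \<le> v N * exp (- ((\<Sum>i<n. t i) - (\<Sum>i<N. t i)))"
  using assms(3)
proof (induction n rule: dec_induct)
  case (step n)
  have "v (Suc n) \<le> (1 - t n) * v n" by (rule assms(2)[OF step(1)])
  also have "\<dots> \<le> exp (- t n) * v n"
    using exp_ge_add_one_self[of "- t n"] v[of n] by (intro mult_right_mono) auto
  also have "\<dots> \<le> exp (- t n) * (v N * exp (- ((\<Sum>i<n. t i) - (\<Sum>i<N. t i))))"
    using step(3) by (intro mult_left_mono) auto
  also have "\<dots> = v N * exp (- ((\<Sum>i<Suc n. t i) - (\<Sum>i<N. t i)))"
    by (simp add: exp_add[symmetric] algebra_simps)
  finally show ?case .
qed simp

lemma contraction_tendsto_zero:
  fixes v t :: "nat \<Rightarrow> real"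
  assumes v: "\<And>n. 0 \<le> v n" and t: "\<And>n. 0 \<le> t n" "\<not> summable t"
    and step: "\<And>n. n \<ge> N \<Longrightarrow> v (Suc n) \<le> (1 - t n) * v n"
  shows "v \<longlonglongrightarrow> 0"
proof (rule LIMSEQ_I)
  fix \<epsilon> :: real
  assume \<epsilon>: "0 < \<epsilon>"
  define P where "P n = (\<Sum>i<n. t i)" for n
  define R where "R = ln ((v N + 1) / \<epsilon>)"
  obtain n0 where n0: "R + P N < P n0"
  proof (rule ccontr)
    assume "\<not> thesis"
    then have "P n \<le> R + P N" for n using that by (meson not_le)
    then have "summable t" unfolding P_def by (intro summableI_nonneg_bounded[OF t(1)])
    then show False using t(2) by simp
  qed
  show "\<exists>n0. \<forall>n\<ge>n0. norm (v n - 0) < \<epsilon>"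
  proof (intro exI allI impI)
    fix n
    assume n: "n \<ge> max N n0"
    have "P n0 \<le> P n" unfolding P_def using n t(1) by (intro sum_mono2) auto
    then have "exp (- (P n - P N)) \<le> exp (- R)" using n0 by simp
    then have "v n \<le> v N * exp (- R)"
      using contraction_exp_bound[where t = t and N = N, OF v step, of n] n v[of N] unfolding P_def
      by (meson max.boundedE mult_left_mono order_trans)
    also have "\<dots> = v N * (\<epsilon> / (v N + 1))"
      unfolding R_def using \<epsilon> v[of N] by (simp add: exp_minus exp_ln)
    also have "\<dots> < \<epsilon>"
      using \<epsilon> v[of N] by (simp add: field_simps)
    finally show "norm (v n - 0) < \<epsilon>" using v[of n] by simp
  qed
qed

lemma contraction_recursion_tendsto_zero:
  fixes u t e :: "nat \<Rightarrow> real"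
  assumes u: "\<And>n. 0 \<le> u n" and t: "\<And>n. 0 \<le> t n" "\<And>n. t n \<le> 1" "\<not> summable t"
    and e: "e \<longlonglongrightarrow> 0" and rec: "\<And>n. u (Suc n) \<le> (1 - t n) * u n + t n * e n"
  shows "u \<longlonglongrightarrow> 0"
proof (rule LIMSEQ_I)
  fix \<epsilon> :: real
  assume \<epsilon>: "0 < \<epsilon>"
  obtain N where N: "\<And>n. n \<ge> N \<Longrightarrow> norm (e n) < \<epsilon> / 2"
    using LIMSEQ_D[OF e, of "\<epsilon> / 2"] \<epsilon> by auto
  define v where "v n = max (u n - \<epsilon> / 2) 0" for n
  have "v \<longlonglongrightarrow> 0"
  proof (rule contraction_tendsto_zero[OF _ t(1,3)])
    show "0 \<le> v n" for n unfolding v_def by simp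
    fix n
    assume "n \<ge> N"
    then have "e n \<le> \<epsilon> / 2" using N by fastforce
    then have "t n * e n \<le> t n * (\<epsilon> / 2)" using t(1)[of n] by (intro mult_left_mono)
    moreover have "(1 - t n) * (u n - \<epsilon> / 2) = (1 - t n) * u n + t n * (\<epsilon> / 2) - \<epsilon> / 2"
      by (simp add: field_simps)
    ultimately have "u (Suc n) - \<epsilon> / 2 \<le> (1 - t n) * (u n - \<epsilon> / 2)"
      using rec[of n] by linarith
    also have "\<dots> \<le> (1 - t n) * v n" unfolding v_def using t(2)[of n] by (intro mult_left_mono) auto
    finally show "v (Suc n) \<le> (1 - t n) * v n"
      unfolding v_def using t(2)[of n] by simp
  qed
  then obtain M where M: "\<forall>n\<ge>M. norm (v n - 0) < \<epsilon> / 2"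
    using LIMSEQ_D[of v 0 "\<epsilon> / 2"] \<epsilon> by auto
  show "\<exists>M. \<forall>n\<ge>M. norm (u n - 0) < \<epsilon>"
  proof (intro exI allI impI)
    fix n
    assume "n \<ge> M"
    then have "norm (v n - 0) < \<epsilon> / 2" using M by blast
    then have "u n - \<epsilon> / 2 < \<epsilon> / 2" unfolding v_def by (auto split: if_splits simp: max_def)
    then show "norm (u n - 0) < \<epsilon>" using u[of n] by simp
  qed
qed

lemma decreasing_from_one_tendsto:
  fixes c :: "nat \<Rightarrow> real"
  assumes "\<And>k. k \<ge> 1 \<Longrightarrow> 0 \<le> c k" "\<And>k. k \<ge> 1 \<Longrightarrow> c (Suc k) \<le> c k"
  obtains c0 where "c \<longlonglongrightarrow> c0" "\<And>k. k \<ge> 1 \<Longrightarrow> c0 \<le> c k"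
proof -
  obtain c0 where c0: "(\<lambda>n. c (Suc n)) \<longlonglongrightarrow> c0" "\<forall>n. c0 \<le> c (Suc n)"
  proof (rule decseq_convergent[of "\<lambda>n. c (Suc n)" 0])
    show "decseq (\<lambda>n. c (Suc n))" by (intro decseq_SucI) (use assms(2) in auto)
    show "\<forall>n. 0 \<le> c (Suc n)" using assms(1) by auto
  qed
  show thesis
  proof (rule that)
    show "c \<longlonglongrightarrow> c0" using c0(1) by (simp add: filterlim_sequentially_Suc)
    show "c0 \<le> c k" if "k \<ge> 1" for k using c0(2) that by (cases k) auto
  qed
qed

lemma decreasing_from_one_le_first:
  fixes c :: "nat \<Rightarrow> real"
  assumes "\<And>k. k \<ge> 1 \<Longrightarrow> c (Suc k) \<le> c k" "k \<ge> 1"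
  shows "c k \<le> c 1"
  using assms(2)
proof (induction k rule: dec_induct)
  case (step k)
  then show ?case using assms(1)[of k] by simp
qed simp

lemma convergent_if_summable_increments:
  fixes f :: "nat \<Rightarrow> real"
  assumes "summable (\<lambda>n. f (Suc n) - f n)"
  shows "convergent f"
proof -
  have "(\<lambda>n. f n - f 0) \<longlonglongrightarrow> (\<Sum>n. f (Suc n) - f n)"
    using summable_LIMSEQ[OF assms] by (simp add: sum_lessThan_telescope)
  then have "(\<lambda>n. (f n - f 0) + f 0) \<longlonglongrightarrow> (\<Sum>n. f (Suc n) - f n) + f 0"
    by (intro tendsto_intros)
  then show ?thesis by (auto simp: convergent_def)
qed

lemma averaging_recursion_convergent_summable:
  fixes \<alpha> \<beta> c :: "nat \<Rightarrow> real"
  assumes c: "\<And>k. k \<ge> 1 \<Longrightarrow> 0 < c k \<and> c k < 1" "summable c"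
    and rec: "\<And>k. k \<ge> 1 \<Longrightarrow> \<beta> (Suc k) = (1 - c (Suc k)) * \<beta> k + c (Suc k) * \<alpha> k"
    and \<alpha>: "\<And>k. \<bar>\<alpha> k\<bar> \<le> M"
  shows "convergent \<beta>"
proof -
  define M' where "M' = max \<bar>\<beta> 1\<bar> M"
  have \<beta>: "\<bar>\<beta> k\<bar> \<le> M'" if "k \<ge> 1" for k
    using that
  proof (induction k rule: dec_induct)
    case (step k)
    have "\<bar>\<beta> (Suc k)\<bar> \<le> \<bar>(1 - c (Suc k)) * \<beta> k\<bar> + \<bar>c (Suc k) * \<alpha> k\<bar>"
      unfolding rec[OF step(1)] by (rule abs_triangle_ineq)
    also have "\<dots> = (1 - c (Suc k)) * \<bar>\<beta> k\<bar> + c (Suc k) * \<bar>\<alpha> k\<bar>"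
      using c(1)[of "Suc k"] by (simp add: abs_mult)
    also have "\<dots> \<le> (1 - c (Suc k)) * M' + c (Suc k) * M'"
      using c(1)[of "Suc k"] step(3) \<alpha>[of k] unfolding M'_def
      by (intro add_mono mult_left_mono) auto
    finally show ?case by (simp add: algebra_simps)
  qed (simp add: M'_def)
  have "summable (\<lambda>n. c (Suc n))" using c(2) summable_Suc_iff[of c] by simp
  then have "summable (\<lambda>n. c (Suc (Suc n)) * (M + M'))"
    using summable_Suc_iff[of "\<lambda>n. c (Suc n)"] by (simp add: summable_mult2)
  then have "summable (\<lambda>n. \<beta> (Suc (Suc n)) - \<beta> (Suc n))"
  proof (rule summable_comparison_test')
    fix n
    have "\<bar>\<alpha> (Suc n) - \<beta> (Suc n)\<bar> \<le> M + M'" using \<alpha>[of "Suc n"] \<beta>[of "Suc n"] by simp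
    moreover have "\<beta> (Suc (Suc n)) - \<beta> (Suc n) = c (Suc (Suc n)) * (\<alpha> (Suc n) - \<beta> (Suc n))"
      using rec[of "Suc n"] by (simp add: algebra_simps)
    ultimately show "norm (\<beta> (Suc (Suc n)) - \<beta> (Suc n)) \<le> c (Suc (Suc n)) * (M + M')"
      using c(1)[of "Suc (Suc n)"] by (simp add: abs_mult mult_left_mono)
  qed
  then have "convergent (\<lambda>n. \<beta> (Suc n))" by (rule convergent_if_summable_increments)
  then show ?thesis by (simp add: convergent_Suc_iff)
qed

lemma abs_averaging_contraction:
  fixes c c' d e :: real
  assumes "0 < c'" "c' \<le> c" "c < 1"
  shows "\<bar>(1 - c' * (2 - c)) * d + c' * e\<bar> \<le> (1 - c') * \<bar>d\<bar> + c' * \<bar>e\<bar>"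
proof -
  have "c' * (2 - c) \<le> c * (2 - c)" using assms by (intro mult_right_mono) auto
  also have "\<dots> \<le> 1" using zero_le_power2[of "1 - c"] by (simp add: power2_eq_square algebra_simps)
  finally have f: "0 \<le> 1 - c' * (2 - c)" "1 - c' * (2 - c) \<le> 1 - c'"
    using assms by (auto simp: algebra_simps)
  have "\<bar>(1 - c' * (2 - c)) * d + c' * e\<bar> \<le> (1 - c' * (2 - c)) * \<bar>d\<bar> + c' * \<bar>e\<bar>"
    using abs_triangle_ineq[of "(1 - c' * (2 - c)) * d" "c' * e"] f assms(1) by (simp add: abs_mult)
  also have "\<dots> \<le> (1 - c') * \<bar>d\<bar> + c' * \<bar>e\<bar>"
    using f by (intro add_right_mono mult_right_mono) auto
  finally show ?thesis .
qed

text \<open>With cl the limit of c, the deviation of \<beta> from \<phi> / (2 - cl) contracts by the factor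
  1 - c (k + 1) * (2 - c k) \<le> 1 - c (k + 1) up to a vanishing error.\<close>

lemma averaging_recursion_tendsto_nonsummable:
  fixes \<alpha> \<beta> c :: "nat \<Rightarrow> real"
  assumes c: "\<And>k. k \<ge> 1 \<Longrightarrow> 0 < c k \<and> c k < 1" "\<And>k. k \<ge> 1 \<Longrightarrow> c (Suc k) \<le> c k"
      "\<not> summable c" "c \<longlonglongrightarrow> cl" "cl \<le> 1"
    and rec: "\<And>k. k \<ge> 1 \<Longrightarrow> \<beta> (Suc k) = (1 - c (Suc k)) * \<beta> k + c (Suc k) * \<alpha> k"
    and lim: "(\<lambda>k. \<alpha> k + (1 - c k) * \<beta> k) \<longlonglongrightarrow> \<phi>"
  shows "\<beta> \<longlonglongrightarrow> \<phi> / (2 - cl)"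
proof -
  define b where "b = \<phi> / (2 - cl)"
  have \<phi>: "\<phi> = (2 - cl) * b" unfolding b_def using c(5) by simp
  define \<eta> where "\<eta> k = (\<alpha> k + (1 - c k) * \<beta> k - \<phi>) + (c k - cl) * b" for k
  have "\<eta> \<longlonglongrightarrow> (\<phi> - \<phi>) + (cl - cl) * b" unfolding \<eta>_def by (intro tendsto_intros lim c(4))
  then have \<eta>: "(\<lambda>n. \<bar>\<eta> (Suc n)\<bar>) \<longlonglongrightarrow> 0"
    by (simp add: filterlim_sequentially_Suc tendsto_rabs_zero_iff)
  have step: "\<bar>\<beta> (Suc k) - b\<bar> \<le> (1 - c (Suc k)) * \<bar>\<beta> k - b\<bar> + c (Suc k) * \<bar>\<eta> k\<bar>"
    if k: "k \<ge> 1" for k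
  proof -
    have "\<beta> (Suc k) - b = (1 - c (Suc k) * (2 - c k)) * (\<beta> k - b) + c (Suc k) * \<eta> k"
      unfolding rec[OF k] \<eta>_def \<phi> by (simp add: algebra_simps)
    moreover have "0 < c (Suc k)" "c (Suc k) \<le> c k" "c k < 1"
      using c(1)[of "Suc k"] c(1)[OF k] c(2)[OF k] by auto
    ultimately show ?thesis using abs_averaging_contraction by metis
  qed
  have "(\<lambda>n. \<bar>\<beta> (Suc n) - b\<bar>) \<longlonglongrightarrow> 0"
  proof (rule contraction_recursion_tendsto_zero[OF _ _ _ _ \<eta>])
    show "0 \<le> c (Suc (Suc n))" "c (Suc (Suc n)) \<le> 1" for n using c(1)[of "Suc (Suc n)"] by auto
    show "\<not> summable (\<lambda>n. c (Suc (Suc n)))"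
      using c(3) summable_Suc_iff[of c] summable_Suc_iff[of "\<lambda>n. c (Suc n)"] by simp
    show "\<bar>\<beta> (Suc (Suc n)) - b\<bar>
        \<le> (1 - c (Suc (Suc n))) * \<bar>\<beta> (Suc n) - b\<bar> + c (Suc (Suc n)) * \<bar>\<eta> (Suc n)\<bar>" for n
      by (rule step) simp
  qed simp
  then have "(\<lambda>n. (\<beta> (Suc n) - b) + b) \<longlonglongrightarrow> 0 + b"
    by (intro tendsto_intros) (simp add: tendsto_rabs_zero_iff)
  then show ?thesis unfolding b_def by (simp add: filterlim_sequentially_Suc)
qed

lemma averaging_recursion_convergent:
  fixes \<alpha> \<beta> c :: "nat \<Rightarrow> real"
  assumes c: "\<And>k. k \<ge> 1 \<Longrightarrow> 0 < c k \<and> c k < 1" "\<And>k. k \<ge> 1 \<Longrightarrow> c (Suc k) \<le> c k"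
    and rec: "\<And>k. k \<ge> 1 \<Longrightarrow> \<beta> (Suc k) = (1 - c (Suc k)) * \<beta> k + c (Suc k) * \<alpha> k"
    and \<alpha>: "\<And>k. \<bar>\<alpha> k\<bar> \<le> M"
    and lim: "(\<lambda>k. \<alpha> k + (1 - c k) * \<beta> k) \<longlonglongrightarrow> \<phi>"
  shows "convergent \<alpha>"
proof -
  obtain cl where cl: "c \<longlonglongrightarrow> cl" "\<And>k. k \<ge> 1 \<Longrightarrow> cl \<le> c k"
    by (rule decreasing_from_one_tendsto[of c]) (use c in \<open>force simp: less_imp_le\<close>)+
  have "convergent \<beta>"
  proof (cases "summable c")
    case True
    show ?thesis
      by (rule averaging_recursion_convergent_summable[of c \<beta> \<alpha> M]) (use c(1) True rec \<alpha> in auto)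
  next
    case False
    have "cl \<le> 1" using cl(2)[of 1] c(1)[of 1] by simp
    then show ?thesis
      using averaging_recursion_tendsto_nonsummable[OF c False cl(1) _ rec lim]
      by (auto simp: convergent_def)
  qed
  then obtain b where "\<beta> \<longlonglongrightarrow> b" by (auto simp: convergent_def)
  then have "(\<lambda>k. (\<alpha> k + (1 - c k) * \<beta> k) - (1 - c k) * \<beta> k) \<longlonglongrightarrow> \<phi> - (1 - cl) * b"
    by (intro tendsto_intros lim cl(1))
  then show ?thesis by (auto simp: convergent_def)
qed

lemma inner_averaging_convergent:
  fixes u v :: "nat \<Rightarrow> 'a::real_inner"
  assumes c: "\<And>k. k \<ge> 1 \<Longrightarrow> 0 < c k \<and> c k < 1" "\<And>k. k \<ge> 1 \<Longrightarrow> c (Suc k) \<le> c k"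
    and rec: "\<And>k. k \<ge> 1 \<Longrightarrow> v (Suc k) = (1 - c (Suc k)) *\<^sub>R v k + c (Suc k) *\<^sub>R u k"
    and u: "bounded (range u)"
    and lim: "convergent (\<lambda>k. (u k + (1 - c k) *\<^sub>R v k) \<bullet> d)"
  shows "convergent (\<lambda>k. u k \<bullet> d)"
proof -
  obtain B where B: "\<And>k. norm (u k) \<le> B" using u unfolding bounded_iff by auto
  obtain \<phi> where "(\<lambda>k. (u k + (1 - c k) *\<^sub>R v k) \<bullet> d) \<longlonglongrightarrow> \<phi>"
    using lim by (auto simp: convergent_def)
  then have "(\<lambda>k. u k \<bullet> d + (1 - c k) * (v k \<bullet> d)) \<longlonglongrightarrow> \<phi>" by (simp add: inner_add_left)
  moreover have "\<bar>u k \<bullet> d\<bar> \<le> B * norm d" for k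
    using Cauchy_Schwarz_ineq2[of "u k" d] B[of k] by (meson mult_right_mono norm_ge_zero order_trans)
  moreover have "v (Suc k) \<bullet> d = (1 - c (Suc k)) * (v k \<bullet> d) + c (Suc k) * (u k \<bullet> d)" if "k \<ge> 1" for k
    using rec[OF that] by (simp add: inner_add_left)
  ultimately show ?thesis
    using averaging_recursion_convergent[where c = c and \<alpha> = "\<lambda>k. u k \<bullet> d"
        and \<beta> = "\<lambda>k. v k \<bullet> d", OF c]
    by blast
qed

lemma limit_points_eq_if_inner_convergent:
  fixes u :: "nat \<Rightarrow> 'a::real_inner"
  assumes "convergent (\<lambda>k. u k \<bullet> (p1 - p2))"
    and "strict_mono r1" "(u \<circ> r1) \<longlonglongrightarrow> p1" and "strict_mono r2" "(u \<circ> r2) \<longlonglongrightarrow> p2"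
  shows "p1 = p2"
proof -
  define d where "d = p1 - p2"
  obtain L where L: "(\<lambda>k. u k \<bullet> d) \<longlonglongrightarrow> L" using assms(1) unfolding d_def convergent_def by blast
  have "p \<bullet> d = L" if "strict_mono r" "(u \<circ> r) \<longlonglongrightarrow> p" for r p
  proof (rule LIMSEQ_unique)
    show "(\<lambda>n. u (r n) \<bullet> d) \<longlonglongrightarrow> p \<bullet> d" using that(2) by (intro tendsto_intros) (simp add: o_def)
    show "(\<lambda>n. u (r n) \<bullet> d) \<longlonglongrightarrow> L" using LIMSEQ_subseq_LIMSEQ[OF L that(1)] by (simp add: o_def)
  qed
  then have "p1 \<bullet> d = p2 \<bullet> d" using assms(2-5) by metis
  then have "d \<bullet> d = 0" unfolding d_def by (simp add: inner_diff_left)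
  then show ?thesis unfolding d_def by simp
qed

lemma bounded_unique_limit_point_tendsto:
  fixes u :: "nat \<Rightarrow> 'a::heine_borel"
  assumes bounded: "bounded (range u)"
    and unique: "\<And>r l. strict_mono r \<Longrightarrow> (u \<circ> r) \<longlonglongrightarrow> l \<Longrightarrow> l = z"
  shows "u \<longlonglongrightarrow> z"
proof (rule ccontr)
  assume "\<not> u \<longlonglongrightarrow> z"
  then obtain \<epsilon> where \<epsilon>: "\<epsilon> > 0" and "\<forall>N. \<exists>n\<ge>N. \<epsilon> \<le> dist (u n) z"
    unfolding LIMSEQ_def by (auto simp: not_less)
  then have far: "infinite {n. \<epsilon> \<le> dist (u n) z}"
    unfolding infinite_nat_iff_unbounded_le by auto
  define s where "s = enumerate {n. \<epsilon> \<le> dist (u n) z}"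
  have s: "strict_mono s" "\<And>n. \<epsilon> \<le> dist (u (s n)) z"
    using strict_mono_enumerate[OF far] enumerate_in_set[OF far] unfolding s_def by auto
  have "bounded (range (u \<circ> s))" using bounded by (rule bounded_subset) auto
  then obtain l r where r: "strict_mono r" "(u \<circ> s \<circ> r) \<longlonglongrightarrow> l"
    using bounded_imp_convergent_subsequence by blast
  then have "l = z" using unique[of "s \<circ> r"] strict_mono_o[OF s(1) r(1)] by (simp add: o_assoc)
  have "(\<lambda>n. dist (u (s (r n))) z) \<longlonglongrightarrow> dist l z"
    using r(2) by (intro tendsto_intros) (simp add: o_def)
  then have "\<epsilon> \<le> dist l z" by (rule LIMSEQ_le_const) (use s(2) in auto)
  then show False using \<open>l = z\<close> \<epsilon> by simp
qed

lemma tendsto_zero_if_norm_sq_le: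
  fixes v :: "nat \<Rightarrow> 'a::real_normed_vector"
  assumes "eventually (\<lambda>k. norm (v k) ^ 2 \<le> C * r k) sequentially" "r \<longlonglongrightarrow> 0"
  shows "v \<longlonglongrightarrow> 0"
proof -
  have "(\<lambda>k. sqrt (C * r k)) \<longlonglongrightarrow> sqrt (C * 0)" by (intro tendsto_intros assms(2))
  then have sqrt_lim: "(\<lambda>k. sqrt (C * r k)) \<longlonglongrightarrow> 0" by simp
  have "(\<lambda>k. norm (v k)) \<longlonglongrightarrow> 0"
  proof (rule tendsto_sandwich[OF _ _ tendsto_const sqrt_lim])
    show "\<forall>\<^sub>F k in sequentially. norm (v k) \<le> sqrt (C * r k)"
      using assms(1) by eventually_elim (rule real_le_rsqrt)
  qed simp
  then show ?thesis by (simp add: tendsto_norm_zero_iff)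
qed

lemma bounded_range_if_norm_sq_le:
  fixes v :: "nat \<Rightarrow> 'a::real_normed_vector"
  assumes "\<And>k. k \<ge> 1 \<Longrightarrow> norm (v k - c) ^ 2 \<le> R"
  shows "bounded (range v)"
proof -
  have "v k \<in> cball c (max (sqrt R) (dist c (v 0)))" for k
  proof (cases "k = 0")
    case False
    then have "norm (v k - c) \<le> sqrt R" using assms real_le_rsqrt by simp
    then show ?thesis by (simp add: dist_norm norm_minus_commute)
  qed simp
  then show ?thesis by (intro bounded_subset[OF bounded_cball]) auto
qed

lemma quasi_fejer_convergent:
  fixes W R e :: "nat \<Rightarrow> real"
  assumes W: "\<And>n. 0 \<le> W n" and R: "\<And>n. 0 \<le> R n" and e: "\<And>n. 0 \<le> e n" "summable e"
    and step: "\<And>n. W (Suc n) + R n \<le> (1 + e n) * W n"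
  shows "convergent W" "R \<longlonglongrightarrow> 0"
proof -
  define S where "S n = (\<Sum>i<n. e i)" for n
  define M where "M = W 0 * exp (suminf e)"
  have S_le: "S n \<le> suminf e" for n unfolding S_def using e by (intro sum_le_suminf) auto
  have "W n \<le> W 0 * exp (S n)" for n
  proof (induction n)
    case (Suc n)
    have "W (Suc n) \<le> (1 + e n) * W n" using step[of n] R[of n] by linarith
    also have "\<dots> \<le> exp (e n) * (W 0 * exp (S n))"
      using Suc W[of n] exp_ge_add_one_self[of "e n"] e(1)[of n]
      by (intro mult_mono) (auto simp: add.commute)
    also have "\<dots> = W 0 * exp (S (Suc n))" unfolding S_def by (simp add: exp_add)
    finally show ?case .
  qed (simp add: S_def)
  then have W_le: "W n \<le> M" for n
    unfolding M_def using S_le[of n] W[of 0] by (meson exp_le_cancel_iff mult_left_mono order_trans)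
  define V where "V n = W n + M * (suminf e - S n)" for n
  have V_step: "V (Suc n) + R n \<le> V n" for n
  proof -
    have "e n * W n \<le> e n * M" using W_le e(1) by (intro mult_left_mono)
    then show ?thesis using step[of n] unfolding V_def S_def by (simp add: algebra_simps)
  qed
  have "0 \<le> M" unfolding M_def using W[of 0] by simp
  then have V_nonneg: "0 \<le> V n" for n unfolding V_def using W[of n] S_le[of n] by simp
  have "V (Suc n) \<le> V n" for n using V_step[of n] R[of n] by linarith
  then obtain l where l: "V \<longlonglongrightarrow> l"
    using decseq_convergent[of V 0, OF decseq_SucI] V_nonneg by blast
  have S: "S \<longlonglongrightarrow> suminf e" unfolding S_def by (rule summable_LIMSEQ[OF e(2)])
  have "(\<lambda>n. V n - M * (suminf e - S n)) \<longlonglongrightarrow> l - M * (suminf e - suminf e)"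
    by (intro tendsto_intros l S)
  then show "convergent W" unfolding V_def by (auto simp: convergent_def)
  have "(\<lambda>n. V n - V (Suc n)) \<longlonglongrightarrow> l - l" by (intro tendsto_intros l LIMSEQ_Suc)
  then show "R \<longlonglongrightarrow> 0"
    by (intro tendsto_sandwich[of "\<lambda>_. 0" R _ "\<lambda>n. V n - V (Suc n)"])
       (use R V_step in \<open>auto intro: always_eventually simp: algebra_simps\<close>)
qed

section \<open>Elementary inequalities\<close>

lemma norm_scaleR_sq_le:
  fixes v :: "'a::real_normed_vector"
  assumes "0 \<le> c" "c \<le> 1"
  shows "norm (c *\<^sub>R v) ^ 2 \<le> c * norm v ^ 2"
proof -
  have "c ^ 2 \<le> c" using mult_left_mono[of c 1 c] assms by (simp add: power2_eq_square)
  then show ?thesis by (simp add: power_mult_distrib mult_right_mono)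
qed

lemma norm_sq_convex_combination:
  fixes u v :: "'a::real_inner"
  shows "norm ((1 - c) *\<^sub>R u + c *\<^sub>R v) ^ 2
    = (1 - c) * norm u ^ 2 + c * norm v ^ 2 - c * (1 - c) * norm (u - v) ^ 2"
proof -
  define M U V D I where "M = norm ((1 - c) *\<^sub>R u + c *\<^sub>R v) ^ 2" and "U = norm u ^ 2"
    and "V = norm v ^ 2" and "D = norm (u - v) ^ 2" and "I = u \<bullet> v"
  have M: "M = (1 - c) ^ 2 * U + 2 * ((1 - c) * c * I) + c ^ 2 * V"
    unfolding M_def U_def V_def I_def
    by (simp only: norm_add_square norm_scaleR power_mult_distrib power2_abs inner_scaleR_left
        inner_scaleR_right mult.assoc mult.left_commute)
  have D: "D = U - 2 * I + V" unfolding D_def U_def V_def I_def by (rule norm_diff_square)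
  have "M = (1 - c) * U + c * V - c * (1 - c) * D"
    unfolding M D by (simp add: algebra_simps power2_eq_square)
  then show ?thesis unfolding M_def U_def V_def D_def .
qed

lemma averaging_step_inner_ge:
  fixes u0 u1 ag0 ag1 md p :: "'a::real_inner"
  assumes ag: "ag1 = (1 - c) *\<^sub>R ag0 + c *\<^sub>R u0" and md: "md = (1 - c) *\<^sub>R u0 + c *\<^sub>R ag1"
    and c: "0 \<le> c"
  shows "norm (u1 - p) ^ 2 + (1 - c) * norm (ag1 - p) ^ 2
      + (1 - c) * norm (u1 - u0) ^ 2 + c * (1 - c) * norm (ag0 - u0) ^ 2
    \<le> norm (u0 - p) ^ 2 + (1 - c) * norm (ag0 - p) ^ 2 + 2 * ((md - u1) \<bullet> (p - u1))"
proof -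
  have polar: "2 * ((md - u1) \<bullet> (p - u1)) = norm (u1 - md) ^ 2 + norm (u1 - p) ^ 2 - norm (md - p) ^ 2"
    using norm_diff_square[of "md - u1" "p - u1"] by (simp add: norm_minus_commute)
  have "md - p = (1 - c) *\<^sub>R (u0 - p) + c *\<^sub>R (ag1 - p)" unfolding md by (simp add: algebra_simps)
  then have md_p: "norm (md - p) ^ 2
      = (1 - c) * norm (u0 - p) ^ 2 + c * norm (ag1 - p) ^ 2 - c * (1 - c) * norm (u0 - ag1) ^ 2"
    by (simp add: norm_sq_convex_combination)
  have "ag1 - p = (1 - c) *\<^sub>R (ag0 - p) + c *\<^sub>R (u0 - p)" unfolding ag by (simp add: algebra_simps)
  then have ag_p: "norm (ag1 - p) ^ 2
      = (1 - c) * norm (ag0 - p) ^ 2 + c * norm (u0 - p) ^ 2 - c * (1 - c) * norm (ag0 - u0) ^ 2"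
    by (simp add: norm_sq_convex_combination)
  define s t where "s = u1 - md" and "t = ag1 - u0"
  define S T I where "S = norm s ^ 2" and "T = norm t ^ 2" and "I = s \<bullet> t"
  have plus: "norm (s + c *\<^sub>R t) ^ 2 = S + 2 * (c * I) + c ^ 2 * T"
    unfolding S_def T_def I_def by (simp add: norm_add_square power_mult_distrib)
  have minus: "norm (s - (1 - c) *\<^sub>R t) ^ 2 = S - 2 * ((1 - c) * I) + (1 - c) ^ 2 * T"
    unfolding S_def T_def I_def by (simp add: norm_diff_square power_mult_distrib)
  have "S + c * (1 - c) * T - (1 - c) * norm (s + c *\<^sub>R t) ^ 2
      = c * norm (s - (1 - c) *\<^sub>R t) ^ 2"
    unfolding plus minus by (simp add: algebra_simps power2_eq_square)
  moreover have "u1 - u0 = s + c *\<^sub>R t" unfolding s_def t_def md by (simp add: algebra_simps)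
  moreover have "norm (u0 - ag1) = norm t" by (simp add: t_def norm_minus_commute)
  ultimately have step: "(1 - c) * norm (u1 - u0) ^ 2 \<le> norm (u1 - md) ^ 2 + c * (1 - c) * norm (u0 - ag1) ^ 2"
    using c unfolding S_def T_def s_def
    by (metis diff_ge_0_iff_ge mult_nonneg_nonneg zero_le_power2)
  have "(1 - c) * norm (ag1 - p) ^ 2 = norm (ag1 - p) ^ 2 - c * norm (ag1 - p) ^ 2"
    "(1 - c) * norm (u0 - p) ^ 2 = norm (u0 - p) ^ 2 - c * norm (u0 - p) ^ 2"
    by (simp_all add: algebra_simps)
  then show ?thesis using polar md_p ag_p step by linarith
qed

lemma mult_le_sqrt_weighted_sum_sq:
  fixes s t \<tau> \<sigma> :: real
  assumes "0 < \<tau>" "0 < \<sigma>"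
  shows "s * t \<le> sqrt (\<sigma> * \<tau>) * (s ^ 2 / (2 * \<tau>) + t ^ 2 / (2 * \<sigma>))"
proof -
  define p r where "p = sqrt \<sigma>" and "r = sqrt \<tau>"
  have pr: "\<sigma> = p ^ 2" "\<tau> = r ^ 2" "sqrt (\<sigma> * \<tau>) = p * r" "0 < p" "0 < r"
    unfolding p_def r_def using assms by (auto simp: real_sqrt_mult)
  have "0 \<le> (p * s - r * t) ^ 2 / (2 * p * r)" using pr by simp
  also have "\<dots> = sqrt (\<sigma> * \<tau>) * (s ^ 2 / (2 * \<tau>) + t ^ 2 / (2 * \<sigma>)) - s * t"
    unfolding pr(3) unfolding pr(1,2) using pr(4,5) by (simp add: field_simps power2_eq_square)
  finally show ?thesis by simp
qed

section \<open>Convergence of the iteration\<close>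

text \<open>The function fs plays the role of the conjugate f* in the paper.\<close>

locale npda =
  fixes g :: "'a::euclidean_space \<Rightarrow> ereal" and fs :: "'b::euclidean_space \<Rightarrow> ereal"
    and K :: "'a \<Rightarrow> 'b" and a b :: "nat \<Rightarrow> real" and \<tau> \<sigma> :: real
    and x xag xmd xbar :: "nat \<Rightarrow> 'a" and y yag ymd :: "nat \<Rightarrow> 'b"
  assumes g: "proper_fun g" "convex_fun g" "closed_fun g"
    and fs: "proper_fun fs" "convex_fun fs" "closed_fun fs"
    and K: "linear K"
    and a_range: "\<And>k. k \<ge> 1 \<Longrightarrow> 0 < a k \<and> a k < 1"
    and b_range: "\<And>k. k \<ge> 1 \<Longrightarrow> 0 < b k \<and> b k < 1"
    and a_mono: "\<And>k. k \<ge> 1 \<Longrightarrow> a (Suc k) \<le> a k"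
    and b_mono: "\<And>k. k \<ge> 1 \<Longrightarrow> b (Suc k) \<le> b k"
    and \<tau>: "\<tau> > 0" and \<sigma>: "\<sigma> > 0"
    and step_a: "\<And>k. k \<ge> 1 \<Longrightarrow> sqrt (\<sigma> * \<tau>) * onorm K < 1 - a k"
    and step_b: "\<And>k. k \<ge> 1 \<Longrightarrow> sqrt (\<sigma> * \<tau>) * onorm K < 1 - b k"
    and upd_xag: "\<And>k. k \<ge> 1 \<Longrightarrow> xag k = (1 - a k) *\<^sub>R xag (k - 1) + a k *\<^sub>R x (k - 1)"
    and upd_yag: "\<And>k. k \<ge> 1 \<Longrightarrow> yag (k + 1) = (1 - b (k + 1)) *\<^sub>R yag k + b (k + 1) *\<^sub>R y k"
    and upd_xmd: "\<And>k. k \<ge> 1 \<Longrightarrow> xmd k = (1 - a k) *\<^sub>R x (k - 1) + a k *\<^sub>R xag k"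
    and upd_ymd: "\<And>k. k \<ge> 1 \<Longrightarrow> ymd (k + 1) = (1 - b (k + 1)) *\<^sub>R y k + b (k + 1) *\<^sub>R yag (k + 1)"
    and upd_x: "\<And>k. k \<ge> 1 \<Longrightarrow> x k = prox \<tau> g (xmd k - \<tau> *\<^sub>R adjoint K (y k))"
    and upd_xbar: "\<And>k. k \<ge> 1 \<Longrightarrow> xbar k = x k + (x k - x (k - 1))"
    and upd_y: "\<And>k. k \<ge> 1 \<Longrightarrow> y (k + 1) = prox \<sigma> fs (ymd (k + 1) + \<sigma> *\<^sub>R K (xbar k))"
begin

definition \<kappa> :: real where "\<kappa> = sqrt (\<sigma> * \<tau>) * onorm K"

definition dx :: "nat \<Rightarrow> 'a" where "dx k = x k - x (k - 1)"

lemma K_diff: "K (u - v) = K u - K v"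
  using K by (simp add: linear_diff)

lemma \<kappa>_less: "k \<ge> 1 \<Longrightarrow> \<kappa> < 1 - a k" "k \<ge> 1 \<Longrightarrow> \<kappa> < 1 - b k"
  using step_a step_b unfolding \<kappa>_def by auto

lemma inner_K_le: "\<bar>K u \<bullet> v\<bar> \<le> \<kappa> * (norm u ^ 2 / (2 * \<tau>) + norm v ^ 2 / (2 * \<sigma>))"
proof -
  have K_bl: "bounded_linear K" using K by (simp add: linear_conv_bounded_linear)
  have "\<bar>K u \<bullet> v\<bar> \<le> norm (K u) * norm v" by (rule Cauchy_Schwarz_ineq2)
  also have "\<dots> \<le> onorm K * (norm u * norm v)"
    using onorm[OF K_bl, of u] by (simp add: mult.assoc[symmetric] mult_right_mono)
  also have "\<dots> \<le> onorm K * (sqrt (\<sigma> * \<tau>) * (norm u ^ 2 / (2 * \<tau>) + norm v ^ 2 / (2 * \<sigma>)))"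
    using onorm_pos_le[OF K_bl] \<tau> \<sigma> by (intro mult_left_mono mult_le_sqrt_weighted_sum_sq) auto
  finally show ?thesis unfolding \<kappa>_def by (simp add: algebra_simps)
qed

lemma x_prox_ineq:
  assumes "k \<ge> 1"
  shows "g (x k) + ereal ((xmd k - x k) \<bullet> (w - x k) / \<tau> - K (w - x k) \<bullet> y k) \<le> g w"
proof -
  define v where "v = xmd k - \<tau> *\<^sub>R adjoint K (y k)"
  have xk: "x k = prox \<tau> g v" unfolding v_def by (rule upd_x[OF assms])
  have "adjoint K (y k) \<bullet> (w - x k) = K (w - x k) \<bullet> y k"
    using adjoint_works[OF K] by (simp add: inner_commute)
  then have "(v - x k) \<bullet> (w - x k) / \<tau> = (xmd k - x k) \<bullet> (w - x k) / \<tau> - K (w - x k) \<bullet> y k"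
    unfolding v_def using \<tau> by (simp add: inner_diff_left inner_add_left field_simps)
  then show ?thesis using prox_variational_ineq[OF g \<tau>, of v w] unfolding xk[symmetric] by simp
qed

lemma y_prox_ineq:
  assumes "k \<ge> 1"
  shows "fs (y (k + 1)) + ereal ((ymd (k + 1) - y (k + 1)) \<bullet> (w - y (k + 1)) / \<sigma>
      + K (xbar k) \<bullet> (w - y (k + 1))) \<le> fs w"
proof -
  define v where "v = ymd (k + 1) + \<sigma> *\<^sub>R K (xbar k)"
  have yk: "y (k + 1) = prox \<sigma> fs v" unfolding v_def by (rule upd_y[OF assms])
  have "(v - y (k + 1)) \<bullet> (w - y (k + 1)) / \<sigma>
      = (ymd (k + 1) - y (k + 1)) \<bullet> (w - y (k + 1)) / \<sigma> + K (xbar k) \<bullet> (w - y (k + 1))"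
    unfolding v_def using \<sigma> by (simp add: inner_diff_left inner_add_left field_simps)
  then show ?thesis using prox_variational_ineq[OF fs \<sigma>, of v w] unfolding yk[symmetric] by simp
qed

lemma x_finite: "k \<ge> 1 \<Longrightarrow> g (x k) \<noteq> \<infinity>"
  using prox_finite[OF g \<tau>] upd_x by metis

lemma y_finite: "k \<ge> 1 \<Longrightarrow> fs (y (k + 1)) \<noteq> \<infinity>"
  using prox_finite[OF fs \<sigma>] upd_y by metis

text \<open>Adding the two prox inequalities at a KKT point to the two subgradient inequalities
  of the KKT point, all function values cancel.\<close>

lemma prox_step_coupling:
  assumes kkt: "kkt_point g fs K xh yh" and k: "k \<ge> 1"
  shows "(xmd (k + 1) - x (k + 1)) \<bullet> (xh - x (k + 1)) / \<tau>
      + (ymd (k + 1) - y (k + 1)) \<bullet> (yh - y (k + 1)) / \<sigma>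
    \<le> K (x (k + 1) - xbar k) \<bullet> (yh - y (k + 1))"
proof -
  obtain G1 G2 F1 F2 where G1: "g (x (k + 1)) = ereal G1" and G2: "g xh = ereal G2"
    and F1: "fs (y (k + 1)) = ereal F1" and F2: "fs yh = ereal F2"
    using kkt x_finite[of "k + 1"] y_finite[OF k] proper_fun_real[OF g(1)] proper_fun_real[OF fs(1)]
    unfolding kkt_point_def by (metis le_add2)
  have "g (x (k + 1)) + ereal ((xmd (k + 1) - x (k + 1)) \<bullet> (xh - x (k + 1)) / \<tau>
      - K (xh - x (k + 1)) \<bullet> y (k + 1)) \<le> g xh"
    by (rule x_prox_ineq) simp
  moreover have "fs (y (k + 1)) + ereal ((ymd (k + 1) - y (k + 1)) \<bullet> (yh - y (k + 1)) / \<sigma>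
      + K (xbar k) \<bullet> (yh - y (k + 1))) \<le> fs yh"
    by (rule y_prox_ineq[OF k])
  moreover have "g xh + ereal (K (xh - x (k + 1)) \<bullet> yh) \<le> g (x (k + 1))"
    and "fs yh + ereal (K xh \<bullet> (y (k + 1) - yh)) \<le> fs (y (k + 1))"
    using kkt unfolding kkt_point_def by auto
  moreover have "K (xh - x (k + 1)) \<bullet> yh + K xh \<bullet> (y (k + 1) - yh) - K (xh - x (k + 1)) \<bullet> y (k + 1)
      + K (xbar k) \<bullet> (yh - y (k + 1)) = - (K (x (k + 1) - xbar k) \<bullet> (yh - y (k + 1)))"
    by (simp add: K_diff inner_diff_left inner_diff_right)
  ultimately show ?thesis using G1 G2 F1 F2 by simp
qed

definition xdist :: "'a \<Rightarrow> nat \<Rightarrow> real" where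
  "xdist xh k = norm (x k - xh) ^ 2 + (1 - a k) * norm (xag k - xh) ^ 2"

definition ydist :: "'b \<Rightarrow> nat \<Rightarrow> real" where
  "ydist yh k = norm (y k - yh) ^ 2 + (1 - b k) * norm (yag k - yh) ^ 2"

definition lyap :: "'a \<Rightarrow> 'b \<Rightarrow> nat \<Rightarrow> real" where
  "lyap xh yh k = (xdist xh k + \<kappa> * norm (dx k) ^ 2) / (2 * \<tau>) + ydist yh k / (2 * \<sigma>)
     + K (dx k) \<bullet> (y k - yh)"

definition dissipation :: "nat \<Rightarrow> real" where
  "dissipation k =
     ((1 - a (k + 1) - \<kappa>) * norm (dx (k + 1)) ^ 2 + a (k + 1) * (1 - a (k + 1)) * norm (xag k - x k) ^ 2)
       / (2 * \<tau>)
   + ((1 - b (k + 1) - \<kappa>) * norm (y (k + 1) - y k) ^ 2 + b (k + 1) * (1 - b (k + 1)) * norm (yag k - y k) ^ 2)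
       / (2 * \<sigma>)"

lemma xdist_step:
  "xdist xh (k + 1) + (1 - a (k + 1)) * norm (dx (k + 1)) ^ 2
      + a (k + 1) * (1 - a (k + 1)) * norm (xag k - x k) ^ 2
    \<le> xdist xh k + (a k - a (k + 1)) * norm (xag k - xh) ^ 2
      + 2 * ((xmd (k + 1) - x (k + 1)) \<bullet> (xh - x (k + 1)))"
proof -
  have "norm (x (k + 1) - xh) ^ 2 + (1 - a (k + 1)) * norm (xag (k + 1) - xh) ^ 2
      + (1 - a (k + 1)) * norm (x (k + 1) - x k) ^ 2 + a (k + 1) * (1 - a (k + 1)) * norm (xag k - x k) ^ 2
    \<le> norm (x k - xh) ^ 2 + (1 - a (k + 1)) * norm (xag k - xh) ^ 2
      + 2 * ((xmd (k + 1) - x (k + 1)) \<bullet> (xh - x (k + 1)))"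
    using upd_xag[of "k + 1"] upd_xmd[of "k + 1"] a_range[of "k + 1"]
    by (intro averaging_step_inner_ge) auto
  moreover have "(1 - a (k + 1)) * norm (xag k - xh) ^ 2
      = (1 - a k) * norm (xag k - xh) ^ 2 + (a k - a (k + 1)) * norm (xag k - xh) ^ 2"
    by (simp add: algebra_simps)
  ultimately show ?thesis unfolding xdist_def dx_def by simp
qed

lemma ydist_step:
  assumes "k \<ge> 1"
  shows "ydist yh (k + 1) + (1 - b (k + 1)) * norm (y (k + 1) - y k) ^ 2
      + b (k + 1) * (1 - b (k + 1)) * norm (yag k - y k) ^ 2
    \<le> ydist yh k + (b k - b (k + 1)) * norm (yag k - yh) ^ 2
      + 2 * ((ymd (k + 1) - y (k + 1)) \<bullet> (yh - y (k + 1)))"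
proof -
  have "norm (y (k + 1) - yh) ^ 2 + (1 - b (k + 1)) * norm (yag (k + 1) - yh) ^ 2
      + (1 - b (k + 1)) * norm (y (k + 1) - y k) ^ 2 + b (k + 1) * (1 - b (k + 1)) * norm (yag k - y k) ^ 2
    \<le> norm (y k - yh) ^ 2 + (1 - b (k + 1)) * norm (yag k - yh) ^ 2
      + 2 * ((ymd (k + 1) - y (k + 1)) \<bullet> (yh - y (k + 1)))"
    using upd_yag[OF assms] upd_ymd[OF assms] b_range[of "k + 1"]
    by (intro averaging_step_inner_ge) auto
  moreover have "(1 - b (k + 1)) * norm (yag k - yh) ^ 2
      = (1 - b k) * norm (yag k - yh) ^ 2 + (b k - b (k + 1)) * norm (yag k - yh) ^ 2"
    by (simp add: algebra_simps)
  ultimately show ?thesis unfolding ydist_def by simp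
qed

lemma lyap_step:
  assumes kkt: "kkt_point g fs K xh yh" and k: "k \<ge> 1"
  shows "lyap xh yh (k + 1) + dissipation k \<le> lyap xh yh k
    + (a k - a (k + 1)) * norm (xag k - xh) ^ 2 / (2 * \<tau>)
    + (b k - b (k + 1)) * norm (yag k - yh) ^ 2 / (2 * \<sigma>)"
proof -
  define Px Py where "Px = (xmd (k + 1) - x (k + 1)) \<bullet> (xh - x (k + 1))"
    and "Py = (ymd (k + 1) - y (k + 1)) \<bullet> (yh - y (k + 1))"
  define N0 N1 M where "N0 = norm (dx k) ^ 2" and "N1 = norm (dx (k + 1)) ^ 2"
    and "M = norm (y (k + 1) - y k) ^ 2"
  define ex ey where "ex = a (k + 1) * (1 - a (k + 1)) * norm (xag k - x k) ^ 2"
    and "ey = b (k + 1) * (1 - b (k + 1)) * norm (yag k - y k) ^ 2"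
  define Da Db where "Da = (a k - a (k + 1)) * norm (xag k - xh) ^ 2"
    and "Db = (b k - b (k + 1)) * norm (yag k - yh) ^ 2"
  define C0 C1 where "C0 = K (dx k) \<bullet> (y k - yh)" and "C1 = K (dx (k + 1)) \<bullet> (y (k + 1) - yh)"
  have "(xdist xh (k + 1) + (1 - a (k + 1)) * N1 + ex) / (2 * \<tau>) \<le> (xdist xh k + Da + 2 * Px) / (2 * \<tau>)"
    using xdist_step \<tau> unfolding N1_def ex_def Da_def Px_def by (intro divide_right_mono) auto
  then have x_part: "(xdist xh (k + 1) + (1 - a (k + 1)) * N1 + ex) / (2 * \<tau>)
      \<le> (xdist xh k + Da) / (2 * \<tau>) + Px / \<tau>"
    by (simp add: add_divide_distrib)
  have "(ydist yh (k + 1) + (1 - b (k + 1)) * M + ey) / (2 * \<sigma>) \<le> (ydist yh k + Db + 2 * Py) / (2 * \<sigma>)"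
    using ydist_step[OF k] \<sigma> unfolding M_def ey_def Db_def Py_def by (intro divide_right_mono) auto
  then have y_part: "(ydist yh (k + 1) + (1 - b (k + 1)) * M + ey) / (2 * \<sigma>)
      \<le> (ydist yh k + Db) / (2 * \<sigma>) + Py / \<sigma>"
    by (simp add: add_divide_distrib)
  have "x (k + 1) - xbar k = dx (k + 1) - dx k" unfolding dx_def upd_xbar[OF k] by simp
  then have "K (x (k + 1) - xbar k) \<bullet> (yh - y (k + 1)) = C0 - C1 + K (dx k) \<bullet> (y (k + 1) - y k)"
    unfolding C0_def C1_def by (simp add: K_diff inner_diff_left inner_diff_right)
  then have coupling: "Px / \<tau> + Py / \<sigma> \<le> C0 - C1 + K (dx k) \<bullet> (y (k + 1) - y k)"
    using prox_step_coupling[OF kkt k] unfolding Px_def Py_def by simp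
  have cross: "K (dx k) \<bullet> (y (k + 1) - y k) \<le> \<kappa> * N0 / (2 * \<tau>) + \<kappa> * M / (2 * \<sigma>)"
    using inner_K_le[of "dx k" "y (k + 1) - y k"] unfolding N0_def M_def by (simp add: algebra_simps)
  have "lyap xh yh (k + 1) + dissipation k
      = (xdist xh (k + 1) + (1 - a (k + 1)) * N1 + ex) / (2 * \<tau>)
      + (ydist yh (k + 1) + (1 - b (k + 1)) * M + ey) / (2 * \<sigma>) - \<kappa> * M / (2 * \<sigma>) + C1"
    unfolding lyap_def dissipation_def N1_def M_def ex_def ey_def C1_def using \<tau> \<sigma>
    by (simp add: field_simps)
  moreover have "lyap xh yh k + Da / (2 * \<tau>) + Db / (2 * \<sigma>)
      = (xdist xh k + Da) / (2 * \<tau>) + \<kappa> * N0 / (2 * \<tau>) + (ydist yh k + Db) / (2 * \<sigma>) + C0"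
    unfolding lyap_def N0_def C0_def using \<tau> \<sigma> by (simp add: field_simps)
  ultimately show ?thesis using x_part y_part coupling cross unfolding Da_def Db_def by linarith
qed

lemma lyap_ge:
  "xdist xh k / (2 * \<tau>) + ((1 - \<kappa>) * norm (y k - yh) ^ 2 + (1 - b k) * norm (yag k - yh) ^ 2) / (2 * \<sigma>)
    \<le> lyap xh yh k"
proof -
  define N C where "N = norm (dx k) ^ 2" and "C = norm (y k - yh) ^ 2"
  have "- (\<kappa> * (N / (2 * \<tau>) + C / (2 * \<sigma>))) \<le> K (dx k) \<bullet> (y k - yh)"
    using inner_K_le[of "dx k" "y k - yh"] unfolding N_def C_def by (simp add: abs_le_iff)
  moreover have "lyap xh yh k = xdist xh k / (2 * \<tau>)
      + ((1 - \<kappa>) * C + (1 - b k) * norm (yag k - yh) ^ 2) / (2 * \<sigma>)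
      + (\<kappa> * (N / (2 * \<tau>) + C / (2 * \<sigma>)) + K (dx k) \<bullet> (y k - yh))"
    unfolding lyap_def ydist_def N_def C_def using \<tau> \<sigma> by (simp add: field_simps)
  ultimately show ?thesis unfolding C_def by linarith
qed

lemma lyap_bounds:
  assumes k: "k \<ge> 1"
  shows "0 \<le> lyap xh yh k"
    and "norm (x k - xh) ^ 2 / (2 * \<tau>) \<le> lyap xh yh k"
    and "(1 - a k) * norm (xag k - xh) ^ 2 / (2 * \<tau>) \<le> lyap xh yh k"
    and "(1 - \<kappa>) * norm (y k - yh) ^ 2 / (2 * \<sigma>) \<le> lyap xh yh k"
    and "(1 - b k) * norm (yag k - yh) ^ 2 / (2 * \<sigma>) \<le> lyap xh yh k"
proof -
  have "0 \<le> 1 - a k" "0 \<le> 1 - b k" "0 \<le> 1 - \<kappa>"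
    using a_range[OF k] b_range[OF k] \<kappa>_less[OF k] by auto
  then have "0 \<le> norm (x k - xh) ^ 2 / (2 * \<tau>)" "0 \<le> (1 - a k) * norm (xag k - xh) ^ 2 / (2 * \<tau>)"
    "0 \<le> (1 - \<kappa>) * norm (y k - yh) ^ 2 / (2 * \<sigma>)" "0 \<le> (1 - b k) * norm (yag k - yh) ^ 2 / (2 * \<sigma>)"
    using \<tau> \<sigma> by auto
  moreover have "norm (x k - xh) ^ 2 / (2 * \<tau>) + (1 - a k) * norm (xag k - xh) ^ 2 / (2 * \<tau>)
      + (1 - \<kappa>) * norm (y k - yh) ^ 2 / (2 * \<sigma>) + (1 - b k) * norm (yag k - yh) ^ 2 / (2 * \<sigma>)
    \<le> lyap xh yh k"
    using lyap_ge[of xh k yh] unfolding xdist_def by (simp add: add_divide_distrib)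
  ultimately show "0 \<le> lyap xh yh k"
    and "norm (x k - xh) ^ 2 / (2 * \<tau>) \<le> lyap xh yh k"
    and "(1 - a k) * norm (xag k - xh) ^ 2 / (2 * \<tau>) \<le> lyap xh yh k"
    and "(1 - \<kappa>) * norm (y k - yh) ^ 2 / (2 * \<sigma>) \<le> lyap xh yh k"
    and "(1 - b k) * norm (yag k - yh) ^ 2 / (2 * \<sigma>) \<le> lyap xh yh k"
    by linarith+
qed

lemma dissipation_nonneg: "0 \<le> dissipation k"
proof -
  have "0 \<le> 1 - a (k + 1) - \<kappa>" "0 \<le> 1 - b (k + 1) - \<kappa>" "0 \<le> a (k + 1) * (1 - a (k + 1))"
    "0 \<le> b (k + 1) * (1 - b (k + 1))"
    using \<kappa>_less[of "k + 1"] a_range[of "k + 1"] b_range[of "k + 1"] by auto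
  then show ?thesis unfolding dissipation_def using \<tau> \<sigma> by (auto intro!: add_nonneg_nonneg)
qed

definition eps :: "nat \<Rightarrow> real" where
  "eps k = (a k - a (k + 1)) / (1 - a 1) + (b k - b (k + 1)) / (1 - b 1)"

text \<open>Since the weights 1 - a k in the Lyapunov function grow, the terms left over by
  lyap_step are a relative perturbation of size eps k, and eps is summable by telescoping.\<close>

lemma lyap_quasi_fejer:
  assumes kkt: "kkt_point g fs K xh yh" and k: "k \<ge> 1"
  shows "lyap xh yh (k + 1) + dissipation k \<le> (1 + eps k) * lyap xh yh k"
proof -
  have drift: "d * N / (2 * t) \<le> d / (1 - c 1) * lyap xh yh k"
    if "0 \<le> d" "0 < t" "0 \<le> N" "c k < 1" "0 < 1 - c 1" "c k \<le> c 1"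
      and "(1 - c k) * N / (2 * t) \<le> lyap xh yh k" for d t N and c :: "nat \<Rightarrow> real"
  proof -
    have "(1 - c 1) * (N / (2 * t)) \<le> (1 - c k) * (N / (2 * t))"
      using that by (intro mult_right_mono) auto
    then have "(1 - c 1) * (N / (2 * t)) \<le> lyap xh yh k" using that(7) by simp
    then have "N / (2 * t) \<le> lyap xh yh k / (1 - c 1)"
      using that(5) by (simp add: pos_le_divide_eq mult.commute)
    then have "d * (N / (2 * t)) \<le> d * (lyap xh yh k / (1 - c 1))"
      using that by (intro mult_left_mono)
    then show ?thesis by simp
  qed
  have "(a k - a (k + 1)) * norm (xag k - xh) ^ 2 / (2 * \<tau>) \<le> (a k - a (k + 1)) / (1 - a 1) * lyap xh yh k"
    using a_mono[OF k] a_range[OF k] a_range[of 1] \<tau> lyap_bounds(3)[OF k]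
      decreasing_from_one_le_first[of a, OF a_mono k]
    by (intro drift) auto
  moreover have "(b k - b (k + 1)) * norm (yag k - yh) ^ 2 / (2 * \<sigma>) \<le> (b k - b (k + 1)) / (1 - b 1) * lyap xh yh k"
    using b_mono[OF k] b_range[OF k] b_range[of 1] \<sigma> lyap_bounds(5)[OF k]
      decreasing_from_one_le_first[of b, OF b_mono k]
    by (intro drift) auto
  ultimately show ?thesis
    using lyap_step[OF kkt k] unfolding eps_def by (simp add: algebra_simps)
qed

lemma eps_summable: "summable (\<lambda>n. eps (Suc n))"
proof -
  obtain la lb where "a \<longlonglongrightarrow> la" "b \<longlonglongrightarrow> lb"
    using decreasing_from_one_tendsto[of a] decreasing_from_one_tendsto[of b] a_range a_mono b_range b_mono
    by (metis less_imp_le)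
  then have "summable (\<lambda>n. a (Suc n) - a (Suc (Suc n)))" "summable (\<lambda>n. b (Suc n) - b (Suc (Suc n)))"
    by (auto intro!: telescope_summable' simp: filterlim_sequentially_Suc)
  then show ?thesis unfolding eps_def by (auto intro!: summable_add summable_divide)
qed

lemma lyap_convergent_dissipation_tendsto_zero:
  assumes kkt: "kkt_point g fs K xh yh"
  shows "convergent (lyap xh yh)" and "dissipation \<longlonglongrightarrow> 0"
proof -
  have "0 \<le> lyap xh yh (Suc n)" "0 \<le> eps (Suc n)" for n
    using lyap_bounds(1)[of "Suc n"] a_mono[of "Suc n"] b_mono[of "Suc n"] a_range[of 1] b_range[of 1]
    by (auto simp: eps_def)
  moreover have "lyap xh yh (Suc (Suc n)) + dissipation (Suc n) \<le> (1 + eps (Suc n)) * lyap xh yh (Suc n)"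
    for n using lyap_quasi_fejer[OF kkt, of "Suc n"] by simp
  ultimately have "convergent (\<lambda>n. lyap xh yh (Suc n))" "(\<lambda>n. dissipation (Suc n)) \<longlonglongrightarrow> 0"
    using quasi_fejer_convergent[of "\<lambda>n. lyap xh yh (Suc n)" "\<lambda>n. dissipation (Suc n)"
        "\<lambda>n. eps (Suc n)", OF _ dissipation_nonneg _ eps_summable]
    by blast+
  then show "convergent (lyap xh yh)" "dissipation \<longlonglongrightarrow> 0"
    by (simp_all add: convergent_Suc_iff filterlim_sequentially_Suc)
qed

lemma iterates_bounded:
  assumes kkt: "kkt_point g fs K xh yh"
  shows "bounded (range x)" and "bounded (range y)"
proof -
  obtain B where "\<And>k. norm (lyap xh yh k) \<le> B"
    using convergent_imp_Bseq[OF lyap_convergent_dissipation_tendsto_zero(1)[OF kkt]] unfolding Bseq_def by blast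
  then have B: "lyap xh yh k \<le> B" for k using abs_ge_self order_trans by fastforce
  show "bounded (range x)"
  proof (rule bounded_range_if_norm_sq_le)
    fix k :: nat
    assume "k \<ge> 1"
    then have "norm (x k - xh) ^ 2 / (2 * \<tau>) \<le> B" using lyap_bounds(2) B order_trans by blast
    then show "norm (x k - xh) ^ 2 \<le> 2 * \<tau> * B" using \<tau> by (simp add: field_simps)
  qed
  show "bounded (range y)"
  proof (rule bounded_range_if_norm_sq_le)
    fix k :: nat
    assume k: "k \<ge> 1"
    then have "(1 - \<kappa>) * norm (y k - yh) ^ 2 / (2 * \<sigma>) \<le> B" using lyap_bounds(4) B order_trans by blast
    moreover have "0 < 1 - \<kappa>" using \<kappa>_less(2)[OF k] b_range[OF k] by simp
    ultimately show "norm (y k - yh) ^ 2 \<le> 2 * \<sigma> * B / (1 - \<kappa>)" using \<sigma> by (simp add: field_simps)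
  qed
qed

lemma dissipation_ge:
  defines "\<mu> \<equiv> min (1 - a 1 - \<kappa>) (1 - b 1 - \<kappa>)"
  shows "\<mu> > 0"
    and "\<mu> * norm (dx (k + 1)) ^ 2 / (2 * \<tau>) \<le> dissipation k"
    and "\<mu> * norm (y (k + 1) - y k) ^ 2 / (2 * \<sigma>) \<le> dissipation k"
    and "a (k + 1) * (1 - a (k + 1)) * norm (xag k - x k) ^ 2 / (2 * \<tau>) \<le> dissipation k"
    and "b (k + 1) * (1 - b (k + 1)) * norm (yag k - y k) ^ 2 / (2 * \<sigma>) \<le> dissipation k"
proof -
  show "\<mu> > 0" unfolding \<mu>_def using \<kappa>_less[of 1] by simp
  have "\<mu> \<le> 1 - a (k + 1) - \<kappa>" "\<mu> \<le> 1 - b (k + 1) - \<kappa>"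
    unfolding \<mu>_def using decreasing_from_one_le_first[of a "k + 1"] decreasing_from_one_le_first[of b "k + 1"]
      a_mono b_mono by auto
  then have "\<mu> * norm (dx (k + 1)) ^ 2 / (2 * \<tau>) \<le> (1 - a (k + 1) - \<kappa>) * norm (dx (k + 1)) ^ 2 / (2 * \<tau>)"
    "\<mu> * norm (y (k + 1) - y k) ^ 2 / (2 * \<sigma>) \<le> (1 - b (k + 1) - \<kappa>) * norm (y (k + 1) - y k) ^ 2 / (2 * \<sigma>)"
    using \<tau> \<sigma> by (auto intro!: divide_right_mono mult_right_mono)
  moreover have "0 \<le> \<mu> * norm (dx (k + 1)) ^ 2 / (2 * \<tau>)" "0 \<le> \<mu> * norm (y (k + 1) - y k) ^ 2 / (2 * \<sigma>)"
    "0 \<le> a (k + 1) * (1 - a (k + 1)) * norm (xag k - x k) ^ 2 / (2 * \<tau>)"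
    "0 \<le> b (k + 1) * (1 - b (k + 1)) * norm (yag k - y k) ^ 2 / (2 * \<sigma>)"
    using \<open>\<mu> > 0\<close> a_range[of "k + 1"] b_range[of "k + 1"] \<tau> \<sigma> by auto
  moreover have "dissipation k = (1 - a (k + 1) - \<kappa>) * norm (dx (k + 1)) ^ 2 / (2 * \<tau>)
      + a (k + 1) * (1 - a (k + 1)) * norm (xag k - x k) ^ 2 / (2 * \<tau>)
      + (1 - b (k + 1) - \<kappa>) * norm (y (k + 1) - y k) ^ 2 / (2 * \<sigma>)
      + b (k + 1) * (1 - b (k + 1)) * norm (yag k - y k) ^ 2 / (2 * \<sigma>)"
    unfolding dissipation_def by (simp add: add_divide_distrib)
  ultimately show "\<mu> * norm (dx (k + 1)) ^ 2 / (2 * \<tau>) \<le> dissipation k"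
    and "\<mu> * norm (y (k + 1) - y k) ^ 2 / (2 * \<sigma>) \<le> dissipation k"
    and "a (k + 1) * (1 - a (k + 1)) * norm (xag k - x k) ^ 2 / (2 * \<tau>) \<le> dissipation k"
    and "b (k + 1) * (1 - b (k + 1)) * norm (yag k - y k) ^ 2 / (2 * \<sigma>) \<le> dissipation k"
    using dissipation_nonneg[of k] by linarith+
qed

lemma xmd_gap: "xmd (Suc k) - x k = (a (Suc k) * (1 - a (Suc k))) *\<^sub>R (xag k - x k)"
proof -
  have "xag (Suc k) - x k = (1 - a (Suc k)) *\<^sub>R (xag k - x k)"
    using upd_xag[of "Suc k"] by (simp add: algebra_simps)
  moreover have "xmd (Suc k) - x k = a (Suc k) *\<^sub>R (xag (Suc k) - x k)"
    using upd_xmd[of "Suc k"] by (simp add: algebra_simps)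
  ultimately show ?thesis by simp
qed

lemma ymd_gap: "k \<ge> 1 \<Longrightarrow> ymd (Suc k) - y k = (b (Suc k) * (1 - b (Suc k))) *\<^sub>R (yag k - y k)"
proof -
  assume k: "k \<ge> 1"
  have "yag (Suc k) - y k = (1 - b (Suc k)) *\<^sub>R (yag k - y k)"
    using upd_yag[OF k] by (simp add: algebra_simps)
  moreover have "ymd (Suc k) - y k = b (Suc k) *\<^sub>R (yag (Suc k) - y k)"
    using upd_ymd[OF k] by (simp add: algebra_simps)
  ultimately show ?thesis by simp
qed

lemma increments_tendsto_zero:
  assumes kkt: "kkt_point g fs K xh yh"
  shows "dx \<longlonglongrightarrow> 0" and "(\<lambda>k. y (Suc k) - y k) \<longlonglongrightarrow> 0"
proof -
  note R = lyap_convergent_dissipation_tendsto_zero(2)[OF kkt]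
  obtain \<mu> where \<mu>: "\<mu> > 0" "\<And>k. \<mu> * norm (dx (k + 1)) ^ 2 / (2 * \<tau>) \<le> dissipation k"
    "\<And>k. \<mu> * norm (y (k + 1) - y k) ^ 2 / (2 * \<sigma>) \<le> dissipation k"
    using dissipation_ge(1-3) by blast
  have "(\<lambda>k. dx (Suc k)) \<longlonglongrightarrow> 0"
    using \<mu> \<tau> by (intro tendsto_zero_if_norm_sq_le[OF always_eventually R, of _ "2 * \<tau> / \<mu>"])
      (simp add: field_simps)
  then show "dx \<longlonglongrightarrow> 0" by (simp add: filterlim_sequentially_Suc)
  show "(\<lambda>k. y (Suc k) - y k) \<longlonglongrightarrow> 0"
    using \<mu> \<sigma> by (intro tendsto_zero_if_norm_sq_le[OF always_eventually R, of _ "2 * \<sigma> / \<mu>"])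
      (simp add: field_simps)
qed

lemma averaging_gaps_tendsto_zero:
  assumes kkt: "kkt_point g fs K xh yh"
  shows "(\<lambda>k. xmd k - x k) \<longlonglongrightarrow> 0" and "(\<lambda>k. ymd (Suc k) - y (Suc k)) \<longlonglongrightarrow> 0"
proof -
  note R = lyap_convergent_dissipation_tendsto_zero(2)[OF kkt]
  have weight: "0 \<le> c * (1 - c)" "c * (1 - c) \<le> 1" if "0 < c \<and> c < 1" for c :: real
    using that by (auto intro: mult_le_one)
  have "(\<lambda>k. xmd (Suc k) - x k) \<longlonglongrightarrow> 0"
  proof (rule tendsto_zero_if_norm_sq_le[OF always_eventually R, of _ "2 * \<tau>"], intro allI)
    fix k
    have "norm (xmd (Suc k) - x k) ^ 2 \<le> a (Suc k) * (1 - a (Suc k)) * norm (xag k - x k) ^ 2"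
      unfolding xmd_gap using weight[OF a_range[of "Suc k"]] by (intro norm_scaleR_sq_le) auto
    then show "norm (xmd (Suc k) - x k) ^ 2 \<le> 2 * \<tau> * dissipation k"
      using dissipation_ge(4)[of k] \<tau> by (simp add: field_simps)
  qed
  then have "(\<lambda>k. (xmd (Suc k) - x k) - dx (Suc k)) \<longlonglongrightarrow> 0 - 0"
    using LIMSEQ_Suc[OF increments_tendsto_zero(1)[OF kkt]] by (intro tendsto_intros)
  then show "(\<lambda>k. xmd k - x k) \<longlonglongrightarrow> 0"
    unfolding dx_def by (simp add: filterlim_sequentially_Suc[symmetric, where f = "\<lambda>k. xmd k - x k"])
  have "\<forall>\<^sub>F k in sequentially. norm (ymd (Suc k) - y k) ^ 2 \<le> 2 * \<sigma> * dissipation k"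
    unfolding eventually_sequentially
  proof (intro exI allI impI)
    fix k :: nat
    assume k: "k \<ge> 1"
    have "norm (ymd (Suc k) - y k) ^ 2 \<le> b (Suc k) * (1 - b (Suc k)) * norm (yag k - y k) ^ 2"
      unfolding ymd_gap[OF k] using weight[OF b_range[of "Suc k"]] by (intro norm_scaleR_sq_le) auto
    then show "norm (ymd (Suc k) - y k) ^ 2 \<le> 2 * \<sigma> * dissipation k"
      using dissipation_ge(5)[of k] \<sigma> by (simp add: field_simps)
  qed
  then have "(\<lambda>k. ymd (Suc k) - y k) \<longlonglongrightarrow> 0" using R by (rule tendsto_zero_if_norm_sq_le)
  then have "(\<lambda>k. (ymd (Suc k) - y k) - (y (Suc k) - y k)) \<longlonglongrightarrow> 0 - 0"
    using increments_tendsto_zero(2)[OF kkt] by (intro tendsto_intros)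
  then show "(\<lambda>k. ymd (Suc k) - y (Suc k)) \<longlonglongrightarrow> 0" by simp
qed

lemma K_tendsto: "f \<longlonglongrightarrow> l \<Longrightarrow> (\<lambda>n. K (f n)) \<longlonglongrightarrow> K l"
  using K by (simp add: linear_conv_bounded_linear bounded_linear.tendsto)

lemma g_ineq_at_limit_point:
  assumes kkt: "kkt_point g fs K xh yh" and s: "strict_mono s" "\<And>n. s n \<ge> 1"
    and xs: "(\<lambda>n. x (s n)) \<longlonglongrightarrow> xs" and ys: "(\<lambda>n. y (s n)) \<longlonglongrightarrow> ys"
  shows "g xs + ereal (K (xs - w) \<bullet> ys) \<le> g w"
proof -
  have md: "(\<lambda>n. xmd (s n) - x (s n)) \<longlonglongrightarrow> 0"
    using LIMSEQ_subseq_LIMSEQ[OF averaging_gaps_tendsto_zero(1)[OF kkt] s(1)] by (simp add: o_def)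
  have "g xs + ereal (0 \<bullet> (w - xs) / \<tau> - K (w - xs) \<bullet> ys) \<le> g w"
  proof (rule closed_fun_add_le_limit[OF g(3,1) xs, rotated])
    show "g (x (s n)) + ereal ((xmd (s n) - x (s n)) \<bullet> (w - x (s n)) / \<tau> - K (w - x (s n)) \<bullet> y (s n))
        \<le> g w" for n
      by (rule x_prox_ineq[OF s(2)])
  qed (intro tendsto_intros md xs ys K_tendsto, use \<tau> in simp)
  then show ?thesis by (simp add: K_diff inner_diff_left)
qed

lemma fs_ineq_at_limit_point:
  assumes kkt: "kkt_point g fs K xh yh" and s: "strict_mono s" "\<And>n. s n \<ge> 1"
    and xs: "(\<lambda>n. x (s n)) \<longlonglongrightarrow> xs" and ys: "(\<lambda>n. y (s n)) \<longlonglongrightarrow> ys"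
  shows "fs ys + ereal (K xs \<bullet> (w - ys)) \<le> fs w"
proof -
  have sub: "(\<lambda>n. f (s n)) \<longlonglongrightarrow> 0" if "f \<longlonglongrightarrow> 0" for f :: "nat \<Rightarrow> 'c::real_normed_vector"
    using LIMSEQ_subseq_LIMSEQ[OF that s(1)] by (simp add: o_def)
  note reg = increments_tendsto_zero[OF kkt, THEN sub] averaging_gaps_tendsto_zero(2)[OF kkt, THEN sub]
  have ys1: "(\<lambda>n. y (Suc (s n))) \<longlonglongrightarrow> ys"
    using tendsto_add[OF ys reg(2)] by simp
  have "xbar (s n) = x (s n) + dx (s n)" for n unfolding dx_def using upd_xbar[OF s(2)] by simp
  then have xbar: "(\<lambda>n. xbar (s n)) \<longlonglongrightarrow> xs"
    using tendsto_add[OF xs reg(1)] by simp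
  have "fs ys + ereal (0 \<bullet> (w - ys) / \<sigma> + K xs \<bullet> (w - ys)) \<le> fs w"
  proof (rule closed_fun_add_le_limit[OF fs(3,1) ys1, rotated])
    show "fs (y (Suc (s n))) + ereal ((ymd (Suc (s n)) - y (Suc (s n))) \<bullet> (w - y (Suc (s n))) / \<sigma>
        + K (xbar (s n)) \<bullet> (w - y (Suc (s n)))) \<le> fs w" for n
      using y_prox_ineq[OF s(2)] by simp
  qed (intro tendsto_intros reg(3) ys1 xbar K_tendsto, use \<sigma> in simp)
  then show ?thesis by simp
qed

lemma limit_point_kkt:
  assumes kkt: "kkt_point g fs K xh yh" and r: "strict_mono r"
    and xr: "(x \<circ> r) \<longlonglongrightarrow> xs" and yr: "(y \<circ> r) \<longlonglongrightarrow> ys"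
  shows "kkt_point g fs K xs ys"
proof -
  define s where "s n = r (Suc n)" for n
  have s: "strict_mono s" unfolding s_def using r by (simp add: strict_mono_def)
  have s1: "s n \<ge> 1" for n using strict_monoD[OF r, of 0 "Suc n"] unfolding s_def by simp
  have xs: "(\<lambda>n. x (s n)) \<longlonglongrightarrow> xs" and ys: "(\<lambda>n. y (s n)) \<longlonglongrightarrow> ys"
    unfolding s_def using LIMSEQ_Suc[OF xr] LIMSEQ_Suc[OF yr] by (simp_all add: o_def)
  note g_ineq = g_ineq_at_limit_point[OF kkt s s1 xs ys]
    and fs_ineq = fs_ineq_at_limit_point[OF kkt s s1 xs ys]
  obtain w v where "g w < \<infinity>" "fs v < \<infinity>" using g(1) fs(1) unfolding proper_fun_def by blast
  then have "g xs \<noteq> \<infinity>" "fs ys \<noteq> \<infinity>"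
    using g_ineq[of w] fs_ineq[of v] by auto
  then show ?thesis unfolding kkt_point_def using g_ineq fs_ineq by blast
qed

lemma lyap_diff:
  "lyap x1 y1 k - lyap x2 y2 k
    = (2 - a k) * (norm x1 ^ 2 - norm x2 ^ 2) / (2 * \<tau>) + (2 - b k) * (norm y1 ^ 2 - norm y2 ^ 2) / (2 * \<sigma>)
      + K (dx k) \<bullet> (y2 - y1)
      - ((x k + (1 - a k) *\<^sub>R xag k) \<bullet> (x1 - x2) / \<tau> + (y k + (1 - b k) *\<^sub>R yag k) \<bullet> (y1 - y2) / \<sigma>)"
proof -
  have "xdist x1 k - xdist x2 k
      = (2 - a k) * (norm x1 ^ 2 - norm x2 ^ 2) - 2 * ((x k + (1 - a k) *\<^sub>R xag k) \<bullet> (x1 - x2))"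
    unfolding xdist_def by (simp add: norm_diff_square inner_diff_right inner_add_left algebra_simps)
  moreover have "ydist y1 k - ydist y2 k
      = (2 - b k) * (norm y1 ^ 2 - norm y2 ^ 2) - 2 * ((y k + (1 - b k) *\<^sub>R yag k) \<bullet> (y1 - y2))"
    unfolding ydist_def by (simp add: norm_diff_square inner_diff_right inner_add_left algebra_simps)
  moreover have "lyap x1 y1 k - lyap x2 y2 k = (xdist x1 k - xdist x2 k) / (2 * \<tau>)
      + (ydist y1 k - ydist y2 k) / (2 * \<sigma>) + K (dx k) \<bullet> (y2 - y1)"
    unfolding lyap_def by (simp add: add_divide_distrib diff_divide_distrib inner_diff_right)
  ultimately show ?thesis by (simp add: diff_divide_distrib)
qed

text \<open>The Lyapunov functions of two KKT points converge, and by lyap_diff their difference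
  is affine in the averaged iterates up to terms that converge by themselves.\<close>

lemma inner_combination_convergent:
  assumes kkt1: "kkt_point g fs K x1 y1" and kkt2: "kkt_point g fs K x2 y2"
  shows "convergent (\<lambda>k. (x k + (1 - a k) *\<^sub>R xag k) \<bullet> (x1 - x2) / \<tau>
    + (y k + (1 - b k) *\<^sub>R yag k) \<bullet> (y1 - y2) / \<sigma>)"
proof -
  obtain la lb where "a \<longlonglongrightarrow> la" "b \<longlonglongrightarrow> lb"
    using decreasing_from_one_tendsto[of a] decreasing_from_one_tendsto[of b] a_range a_mono b_range b_mono
    by (metis less_imp_le)
  moreover obtain l1 l2 where "lyap x1 y1 \<longlonglongrightarrow> l1" "lyap x2 y2 \<longlonglongrightarrow> l2"
    using lyap_convergent_dissipation_tendsto_zero(1)[OF kkt1] lyap_convergent_dissipation_tendsto_zero(1)[OF kkt2] by (auto simp: convergent_def)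
  moreover note K_tendsto[OF increments_tendsto_zero(1)[OF kkt1]]
  ultimately have "(\<lambda>k. (2 - a k) * (norm x1 ^ 2 - norm x2 ^ 2) / (2 * \<tau>)
      + (2 - b k) * (norm y1 ^ 2 - norm y2 ^ 2) / (2 * \<sigma>) + K (dx k) \<bullet> (y2 - y1)
      - (lyap x1 y1 k - lyap x2 y2 k))
    \<longlonglongrightarrow> (2 - la) * (norm x1 ^ 2 - norm x2 ^ 2) / (2 * \<tau>)
      + (2 - lb) * (norm y1 ^ 2 - norm y2 ^ 2) / (2 * \<sigma>) + K 0 \<bullet> (y2 - y1) - (l1 - l2)"
    by (intro tendsto_intros) (use \<tau> \<sigma> in auto)
  then show ?thesis unfolding lyap_diff by (auto simp: convergent_def)
qed

lemma x_limit_points_eq: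
  assumes kkt: "kkt_point g fs K x1 yh" "kkt_point g fs K x2 yh"
    and "strict_mono r1" "(x \<circ> r1) \<longlonglongrightarrow> x1" "strict_mono r2" "(x \<circ> r2) \<longlonglongrightarrow> x2"
  shows "x1 = x2"
proof (rule limit_points_eq_if_inner_convergent[OF _ assms(3-6)])
  have "convergent (\<lambda>k. (x k + (1 - a k) *\<^sub>R xag k) \<bullet> (x1 - x2) / \<tau>)"
    using inner_combination_convergent[OF kkt] by simp
  then have "convergent (\<lambda>k. (x k + (1 - a k) *\<^sub>R xag k) \<bullet> (x1 - x2))"
    using convergent_mult_const_right_iff[of "1 / \<tau>"] \<tau> by simp
  then show "convergent (\<lambda>k. x k \<bullet> (x1 - x2))"
    using upd_xag[of "Suc _"]
    by (intro inner_averaging_convergent[where c = a and v = xag, OF a_range a_mono _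
          iterates_bounded(1)[OF kkt(1)]]) auto
qed

lemma y_limit_points_eq:
  assumes kkt: "kkt_point g fs K xh y1" "kkt_point g fs K xh y2"
    and "strict_mono r1" "(y \<circ> r1) \<longlonglongrightarrow> y1" "strict_mono r2" "(y \<circ> r2) \<longlonglongrightarrow> y2"
  shows "y1 = y2"
proof (rule limit_points_eq_if_inner_convergent[OF _ assms(3-6)])
  have "convergent (\<lambda>k. (y k + (1 - b k) *\<^sub>R yag k) \<bullet> (y1 - y2) / \<sigma>)"
    using inner_combination_convergent[OF kkt] by simp
  then have "convergent (\<lambda>k. (y k + (1 - b k) *\<^sub>R yag k) \<bullet> (y1 - y2))"
    using convergent_mult_const_right_iff[of "1 / \<sigma>"] \<sigma> by simp
  then show "convergent (\<lambda>k. y k \<bullet> (y1 - y2))"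
    using upd_yag
    by (intro inner_averaging_convergent[where c = b and v = yag, OF b_range b_mono _
          iterates_bounded(2)[OF kkt(1)]]) auto
qed

lemma limit_point_subsequence:
  fixes r :: "nat \<Rightarrow> nat"
  assumes kkt: "kkt_point g fs K xh yh" and r: "strict_mono r"
  obtains r' p q where "strict_mono r'" "(x \<circ> (r \<circ> r')) \<longlonglongrightarrow> p" "(y \<circ> (r \<circ> r')) \<longlonglongrightarrow> q"
    and "kkt_point g fs K p q"
proof -
  have "bounded (range ((\<lambda>k. (x k, y k)) \<circ> r))"
    using bounded_Times[OF iterates_bounded[OF kkt]] by (rule bounded_subset) auto
  then obtain pq r' where r': "strict_mono r'" "((\<lambda>k. (x k, y k)) \<circ> r \<circ> r') \<longlonglongrightarrow> pq"
    using bounded_imp_convergent_subsequence by blast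
  then have "(x \<circ> (r \<circ> r')) \<longlonglongrightarrow> fst pq" "(y \<circ> (r \<circ> r')) \<longlonglongrightarrow> snd pq"
    using tendsto_fst[OF r'(2)] tendsto_snd[OF r'(2)] by (simp_all add: o_def)
  moreover have "strict_mono (r \<circ> r')" using r r'(1) by (rule strict_mono_o)
  ultimately show thesis using that r'(1) limit_point_kkt[OF kkt] by blast
qed

theorem iterates_tendsto_kkt_point:
  assumes kkt: "kkt_point g fs K xh yh"
  shows "\<exists>xs ys. kkt_point g fs K xs ys \<and> (\<lambda>k. (x k, y k)) \<longlonglongrightarrow> (xs, ys)"
proof -
  obtain r0 xs ys where r0: "strict_mono r0" "(x \<circ> r0) \<longlonglongrightarrow> xs" "(y \<circ> r0) \<longlonglongrightarrow> ys"
    and kkt_s: "kkt_point g fs K xs ys"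
    using limit_point_subsequence[OF kkt strict_mono_id] by (metis id_comp)
  have "x \<longlonglongrightarrow> xs"
  proof (rule bounded_unique_limit_point_tendsto[OF iterates_bounded(1)[OF kkt]])
    fix r l
    assume r: "strict_mono r" "(x \<circ> r) \<longlonglongrightarrow> l"
    obtain r' p q where r': "strict_mono r'" "(x \<circ> (r \<circ> r')) \<longlonglongrightarrow> p" "kkt_point g fs K p q"
      using limit_point_subsequence[OF kkt r(1)] by metis
    have "(x \<circ> (r \<circ> r')) \<longlonglongrightarrow> l" using LIMSEQ_subseq_LIMSEQ[OF r(2) r'(1)] by (simp add: o_assoc)
    with r'(2) have "p = l" by (rule LIMSEQ_unique)
    with kkt_point_swap[OF g(1) fs(1) K r'(3) kkt_s] have "kkt_point g fs K l ys" by simp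
    from x_limit_points_eq[OF this kkt_s strict_mono_o[OF r(1) r'(1)] \<open>(x \<circ> (r \<circ> r')) \<longlonglongrightarrow> l\<close> r0(1,2)]
    show "l = xs" .
  qed
  moreover have "y \<longlonglongrightarrow> ys"
  proof (rule bounded_unique_limit_point_tendsto[OF iterates_bounded(2)[OF kkt]])
    fix r l
    assume r: "strict_mono r" "(y \<circ> r) \<longlonglongrightarrow> l"
    obtain r' p q where r': "strict_mono r'" "(y \<circ> (r \<circ> r')) \<longlonglongrightarrow> q" "kkt_point g fs K p q"
      using limit_point_subsequence[OF kkt r(1)] by metis
    have "(y \<circ> (r \<circ> r')) \<longlonglongrightarrow> l" using LIMSEQ_subseq_LIMSEQ[OF r(2) r'(1)] by (simp add: o_assoc)
    with r'(2) have "q = l" by (rule LIMSEQ_unique)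
    with kkt_point_swap[OF g(1) fs(1) K kkt_s r'(3)] have "kkt_point g fs K xs l" by simp
    from y_limit_points_eq[OF this kkt_s strict_mono_o[OF r(1) r'(1)] \<open>(y \<circ> (r \<circ> r')) \<longlonglongrightarrow> l\<close> r0(1,3)]
    show "l = ys" .
  qed
  ultimately show ?thesis using kkt_s by (blast intro: tendsto_Pair)
qed

end

theorem theorem3p1:
  fixes g :: "'a::euclidean_space \<Rightarrow> ereal"
    and f :: "'b::euclidean_space \<Rightarrow> ereal"
    and K :: "'a \<Rightarrow> 'b"
    and a b :: "nat \<Rightarrow> real"
    and \<tau> \<sigma> \<theta> :: real
    and x xag xmd xbar :: "nat \<Rightarrow> 'a"
    and y yag ymd :: "nat \<Rightarrow> 'b"
  assumes g: "proper_fun g" "convex_fun g" "closed_fun g"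
    and f: "proper_fun f" "convex_fun f" "closed_fun f"
    and K: "linear K"
    and saddle_exists: "\<exists>xh yh. saddle_point (lagr g f K) xh yh"
    and a_range: "\<And>k. k \<ge> 1 \<Longrightarrow> 0 < a k \<and> a k < 1"
    and b_range: "\<And>k. k \<ge> 1 \<Longrightarrow> 0 < b k \<and> b k < 1"
    and a_mono: "\<And>k. k \<ge> 1 \<Longrightarrow> a (Suc k) \<le> a k"
    and b_mono: "\<And>k. k \<ge> 1 \<Longrightarrow> b (Suc k) \<le> b k"
    and steps: "\<tau> > 0" "\<sigma> > 0"
    and step_a: "\<And>k. k \<ge> 1 \<Longrightarrow> sqrt (\<sigma> * \<tau>) * onorm K < 1 - a k"
    and step_b: "\<And>k. k \<ge> 1 \<Longrightarrow> sqrt (\<sigma> * \<tau>) * onorm K < 1 - b k"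
    and theta: "\<theta> = 1"
    and init_x: "xag 0 = x 0"
    and init_y: "yag 1 = y 1"
    and upd_xag: "\<And>k. k \<ge> 1 \<Longrightarrow> xag k = (1 - a k) *\<^sub>R xag (k - 1) + a k *\<^sub>R x (k - 1)"
    and upd_yag: "\<And>k. k \<ge> 1 \<Longrightarrow> yag (k + 1) = (1 - b (k + 1)) *\<^sub>R yag k + b (k + 1) *\<^sub>R y k"
    and upd_xmd: "\<And>k. k \<ge> 1 \<Longrightarrow> xmd k = (1 - a k) *\<^sub>R x (k - 1) + a k *\<^sub>R xag k"
    and upd_ymd: "\<And>k. k \<ge> 1 \<Longrightarrow> ymd (k + 1) = (1 - b (k + 1)) *\<^sub>R y k + b (k + 1) *\<^sub>R yag (k + 1)"
    and upd_x: "\<And>k. k \<ge> 1 \<Longrightarrow> x k = prox \<tau> g (xmd k - \<tau> *\<^sub>R adjoint K (y k))"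
    and upd_xbar: "\<And>k. k \<ge> 1 \<Longrightarrow> xbar k = x k + \<theta> *\<^sub>R (x k - x (k - 1))"
    and upd_y: "\<And>k. k \<ge> 1 \<Longrightarrow> y (k + 1) = prox \<sigma> (conj_fun f) (ymd (k + 1) + \<sigma> *\<^sub>R K (xbar k))"
  shows "\<exists>xh yh. saddle_point (lagr g f K) xh yh \<and> ((\<lambda>k. (x k, y k)) \<longlonglongrightarrow> (xh, yh))"
proof -
  have f_conj: "proper_fun (conj_fun f)" "convex_fun (conj_fun f)" "closed_fun (conj_fun f)"
    using proper_fun_conj_fun[OF f] convex_fun_conj_fun closed_fun_conj_fun f(1)
    unfolding proper_fun_def by auto
  interpret npda g "conj_fun f" K a b \<tau> \<sigma> x xag xmd xbar y yag ymd
    by (rule npda.intro[OF g f_conj K a_range b_range a_mono b_mono steps step_a step_b upd_xag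
          upd_yag upd_xmd upd_ymd upd_x _ upd_y]) (use upd_xbar theta in auto)
  have "lagr g f K = (\<lambda>x y. g x + ereal (K x \<bullet> y) - conj_fun f y)"
    by (simp add: lagr_def fun_eq_iff)
  note saddle_iff = saddle_point_iff_kkt_point[OF g(1) f_conj(1) K, folded this]
  obtain xh yh where "kkt_point g (conj_fun f) K xh yh" using saddle_exists saddle_iff by blast
  then show ?thesis using iterates_tendsto_kkt_point saddle_iff by blast
qed

end
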